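(* Fix $\ell_0>0$ and $h_0>0$. There exist $U_0=U_0(\ell_0,d,h_0,t)$ and a function $\varepsilon_{\rm ch}(U,\beta;h_0)\ge0$ such that for all $U\ge U_0$, all $\beta>0$ with $\beta J_0(U)\ge\ell_0$, all $L\in2\mathbb N$ and all $|h|\le h_0$, writing $\omega=\omega^{\rm Hub}_{\Lambda_L,\beta,U,h}$: \[ \frac1{|\Lambda_L|}\sum_{x\in\Lambda_L}\omega(q_x)\le\varepsilon_{\rm ch}(U,\beta;h_0),\qquad \frac1{|\Lambda_L|}\sum_{x\in\Lambda_L}\omega(n_{x\uparrow}n_{x\downarrow})\le\tfrac12\varepsilon_{\rm ch}(U,\beta;h_0), \] \[ \Bigl|\frac1{|\Lambda_L|}\omega(C^{\rm ch}_{\Lambda_L})\Bigr|\le\varepsilon_{\rm ch}(U,\beta;h_0),\qquad \frac1{|\Lambda_L|^2}\omega\bigl((C^{\rm ch}_{\Lambda_L})^2\bigr)\le\varepsilon_{\rm ch}(U,\beta;h_0). \] Finally, $\lim_{U\to\infty}\sup_{\beta J_0(U)\ge\ell_0}\varepsilon_{\rm ch}(U,\beta;h_0)=0$.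
   Context: $d\ge1$, $t\in\mathbb R\setminus\{0\}$; $\Lambda_L=(\mathbb Z/L\mathbb Z)^d$ ($L\in2\mathbb N$), $\mathscr B_{\Lambda_L}$ the unordered nearest-neighbour bonds (each once). Fermionic Fock space over $\ell^2(\Lambda_L)\otimes\mathbb C^2$ with CAR operators $c_{x\sigma}$; $n_{x\sigma}=c^*_{x\sigma}c_{x\sigma}$, $n_x=n_{x\uparrow}+n_{x\downarrow}$; half-filled sector $\mathcal H^{\rm hf}_{\Lambda_L}=\ker(\sum_xn_x-|\Lambda_L|)$. $D_{\Lambda_L}=\sum_xn_{x\uparrow}n_{x\downarrow}$, $T_{\Lambda_L}=-t\sum_{\{x,y\}\in\mathscr B}\sum_\sigma(c^*_{x\sigma}c_{y\sigma}+c^*_{y\sigma}c_{x\sigma})$, $\eta_x=(-1)^{x_1+\dots+x_d}$, $M_{\Lambda_L}=\sum_x\eta_x\frac12(n_{x\uparrow}-n_{x\downarrow})$, $H^{\rm Hub}_{\Lambda_L}(h)=UD_{\Lambda_L}+T_{\Lambda_L}-hM_{\Lambda_L}$ on $\mathcal H^{\rm hf}_{\Lambda_L}$ ($U>0$). $\omega^{\rm Hub}_{\Lambda_L,\beta,U,h}(O)=\operatorname{Tr}_{\mathcal H^{\rm hf}}(Oe^{-\beta H^{\rm Hub}_{\Lambda_L}(h)})/\operatorname{Tr}_{\mathcal H^{\rm hf}}e^{-\beta H^{\rm Hub}_{\Lambda_L}(h)}$. $J_0(U)=4t^2/U$. Charge observables: $q_x=(n_x-1)^2$ and $C^{\rm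 ch}_{\Lambda_L}=\sum_{x\in\Lambda_L}\eta_x(n_x-1)$. *)

theory Defs
  imports Complex_Main "HOL-Library.Extended_Real"
begin

text \<open>Sites of the torus (Z/LZ)^d are encoded by s < L^d, with coordinates
  coord L s i = (s div L^i) mod L.  The Fock space has orthonormal basis
  indexed by occupation sets S \<subseteq> {0..<2 L^d}; operators are matrices
  indexed by pairs of such sets (entry T S = <T|A|S>).  Fermionic signs follow
  the Jordan-Wigner convention for the mode order.\<close>

type_synonym fop = "nat set \<Rightarrow> nat set \<Rightarrow> complex"

datatype spin = Up | Dn

definition nsites :: "nat \<Rightarrow> nat \<Rightarrow> nat" where
  "nsites L d = L ^ d"

definition nmodes :: "nat \<Rightarrow> nat \<Rightarrow> nat" where
  "nmodes L d = 2 * L ^ d"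

definition mode :: "nat \<Rightarrow> spin \<Rightarrow> nat" where
  "mode x \<sigma> = (case \<sigma> of Up \<Rightarrow> 2 * x | Dn \<Rightarrow> 2 * x + 1)"

definition op_id :: fop where
  "op_id = (\<lambda>T S. if T = S then 1 else 0)"

definition op_add :: "fop \<Rightarrow> fop \<Rightarrow> fop" where
  "op_add A B = (\<lambda>T S. A T S + B T S)"

definition op_smult :: "complex \<Rightarrow> fop \<Rightarrow> fop" where
  "op_smult c A = (\<lambda>T S. c * A T S)"

definition op_sum :: "('i \<Rightarrow> fop) \<Rightarrow> 'i set \<Rightarrow> fop" where
  "op_sum f I = (\<lambda>T S. \<Sum>i\<in>I. f i T S)"

definition op_mult :: "nat \<Rightarrow> fop \<Rightarrow> fop \<Rightarrow> fop" where
  "op_mult M A B = (\<lambda>T S. \<Sum>R\<in>Pow {0..<M}. A T R * B R S)"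

primrec op_pow :: "nat \<Rightarrow> fop \<Rightarrow> nat \<Rightarrow> fop" where
  "op_pow M A 0 = op_id"
| "op_pow M A (Suc n) = op_mult M A (op_pow M A n)"

definition op_exp :: "nat \<Rightarrow> fop \<Rightarrow> fop" where
  "op_exp M A = (\<lambda>T S. \<Sum>n. op_pow M A n T S / of_nat (fact n))"

definition ann :: "nat \<Rightarrow> fop" where
  "ann m = (\<lambda>T S. if m \<in> S \<and> T = S - {m}
                    then (-1) ^ card {k \<in> S. k < m} else 0)"

definition cre :: "nat \<Rightarrow> fop" where
  "cre m = (\<lambda>T S. cnj (ann m S T))"

definition coord :: "nat \<Rightarrow> nat \<Rightarrow> nat \<Rightarrow> nat" where
  "coord L s i = (s div L ^ i) mod L"

definition sites :: "nat \<Rightarrow> nat \<Rightarrow> nat set" where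
  "sites L d = {0..<L ^ d}"

text \<open>Translation by the unit vector e_i on the torus.\<close>
definition shift :: "nat \<Rightarrow> nat \<Rightarrow> nat \<Rightarrow> nat" where
  "shift L s i = s - coord L s i * L ^ i + ((coord L s i + 1) mod L) * L ^ i"

definition bonds :: "nat \<Rightarrow> nat \<Rightarrow> nat set set" where
  "bonds L d = {{s, shift L s i} | s i. s \<in> sites L d \<and> i < d}"

definition eta :: "nat \<Rightarrow> nat \<Rightarrow> nat \<Rightarrow> complex" where
  "eta L d x = (-1) ^ (\<Sum>i<d. coord L x i)"

definition num :: "nat \<Rightarrow> nat \<Rightarrow> nat \<Rightarrow> spin \<Rightarrow> fop" where
  "num L d x \<sigma> = op_mult (nmodes L d) (cre (mode x \<sigma>)) (ann (mode x \<sigma>))"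

definition ntot :: "nat \<Rightarrow> nat \<Rightarrow> nat \<Rightarrow> fop" where
  "ntot L d x = op_add (num L d x Up) (num L d x Dn)"

definition double_occ :: "nat \<Rightarrow> nat \<Rightarrow> fop" where
  "double_occ L d = op_sum (\<lambda>x. op_mult (nmodes L d) (num L d x Up) (num L d x Dn)) (sites L d)"

definition hopping :: "nat \<Rightarrow> nat \<Rightarrow> real \<Rightarrow> fop" where
  "hopping L d t = op_smult (- complex_of_real t)
     (op_sum (\<lambda>B. op_sum (\<lambda>\<sigma>. op_sum (\<lambda>x. op_sum (\<lambda>y.
         op_mult (nmodes L d) (cre (mode x \<sigma>)) (ann (mode y \<sigma>))) (B - {x})) B) {Up, Dn})
       (bonds L d))"

definition stag_mag :: "nat \<Rightarrow> nat \<Rightarrow> fop" where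
  "stag_mag L d = op_sum (\<lambda>x. op_smult (eta L d x / 2)
       (op_add (num L d x Up) (op_smult (-1) (num L d x Dn)))) (sites L d)"

definition hubbard_H :: "nat \<Rightarrow> nat \<Rightarrow> real \<Rightarrow> real \<Rightarrow> real \<Rightarrow> fop" where
  "hubbard_H L d t U h = op_add (op_smult (complex_of_real U) (double_occ L d))
      (op_add (hopping L d t) (op_smult (- complex_of_real h) (stag_mag L d)))"

text \<open>Trace over the half-filled sector (exactly L^d particles).\<close>
definition trace_hf :: "nat \<Rightarrow> nat \<Rightarrow> fop \<Rightarrow> complex" where
  "trace_hf L d X = (\<Sum>S\<in>{S \<in> Pow {0..<nmodes L d}. card S = nsites L d}. X S S)"

definition gibbs_hf :: "nat \<Rightarrow> nat \<Rightarrow> real \<Rightarrow> real \<Rightarrow> real \<Rightarrow> real \<Rightarrow> fop \<Rightarrow> complex" where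
  "gibbs_hf L d t \<beta> U h Obs =
     (let E = op_exp (nmodes L d) (op_smult (- complex_of_real \<beta>) (hubbard_H L d t U h))
      in trace_hf L d (op_mult (nmodes L d) Obs E) / trace_hf L d E)"

definition J0 :: "real \<Rightarrow> real \<Rightarrow> real" where
  "J0 t U = 4 * t ^ 2 / U"

definition q_ch :: "nat \<Rightarrow> nat \<Rightarrow> nat \<Rightarrow> fop" where
  "q_ch L d x = (let A = op_add (ntot L d x) (op_smult (-1) op_id)
                 in op_mult (nmodes L d) A A)"

definition C_ch :: "nat \<Rightarrow> nat \<Rightarrow> fop" where
  "C_ch L d = op_sum (\<lambda>x. op_smult (eta L d x) (op_add (ntot L d x) (op_smult (-1) op_id))) (sites L d)"

end

theory Submission
  imports Defs "Jordan_Normal_Form.Char_Poly"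
begin

text \<open>
  All charge observables are diagonal in the occupation basis, so their Gibbs expectations are
  averages against the weights \<open>\<mu> S = <S| exp (-\<beta> H) |S> / Z\<close> on half-filled configurations \<open>S\<close>.
  For such \<open>S\<close> one has \<open>\<Sum>\<^sub>x q\<^sub>x = 2 D\<close>, \<open>|C| \<le> 2 D\<close> and \<open>C\<^sup>2 \<le> 2 |\<Lambda>| D\<close>, where \<open>D\<close> counts
  the doubly occupied sites, so everything reduces to the mean double occupancy.
  Diagonalise \<open>H = U D + T - h M\<close> on the half-filled sector. In each eigenstate \<open>U <D>\<close> exceeds
  the eigenvalue by at most \<open>\<parallel>T\<parallel> + |h| |\<Lambda>|/2\<close>; the Gibbs average of the eigenvalues exceeds the
  ground energy by at most \<open>(2 ln dim + 1)/\<beta>\<close>; and the ground energy is at most the energy of the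
  configuration with one up-spin per site, which has no double occupancy. With
  \<open>\<parallel>T\<parallel> \<le> 4 |t| d |\<Lambda>|\<close> (row sums) and \<open>ln dim \<le> 2 |\<Lambda>|\<close> this gives
  \<open>\<mu>(D)/|\<Lambda>| \<le> (8 |t| d + h0 + 5/\<beta>)/U\<close>, which tends to \<open>0\<close> uniformly in \<open>\<beta> J0(U) \<ge> l0\<close> since then
  \<open>1/\<beta> \<le> 4 t\<^sup>2/(l0 U)\<close>.
\<close>

section \<open>Matrices indexed by a finite set\<close>

type_synonym 'a cmat = "'a \<Rightarrow> 'a \<Rightarrow> complex"

definition mmul :: "'a set \<Rightarrow> 'a cmat \<Rightarrow> 'a cmat \<Rightarrow> 'a cmat" where
  "mmul I A B = (\<lambda>i j. \<Sum>k\<in>I. A i k * B k j)"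

definition madj :: "'a cmat \<Rightarrow> 'a cmat" where
  "madj A = (\<lambda>i j. cnj (A j i))"

definition mone :: "'a cmat" where
  "mone = (\<lambda>i j. if i = j then 1 else 0)"

definition eq_on :: "'a set \<Rightarrow> 'a cmat \<Rightarrow> 'a cmat \<Rightarrow> bool" where
  "eq_on I A B \<longleftrightarrow> (\<forall>i\<in>I. \<forall>j\<in>I. A i j = B i j)"

definition hermitian_on :: "'a set \<Rightarrow> 'a cmat \<Rightarrow> bool" where
  "hermitian_on I A \<longleftrightarrow> (\<forall>i\<in>I. \<forall>j\<in>I. cnj (A i j) = A j i)"

definition unitary_on :: "'a set \<Rightarrow> 'a cmat \<Rightarrow> bool" where
  "unitary_on I V \<longleftrightarrow> eq_on I (mmul I (madj V) V) mone \<and> eq_on I (mmul I V (madj V)) mone"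

lemma cnj_mult_self: "cnj z * z = of_real ((cmod z)\<^sup>2)"
  by (metis complex_norm_square mult.commute)

lemma mmul_assoc: "finite I \<Longrightarrow> mmul I (mmul I A B) C = mmul I A (mmul I B C)"
  unfolding mmul_def
  by (auto simp: sum_distrib_left sum_distrib_right mult.assoc intro!: ext sum.swap)

lemma madj_mmul: "madj (mmul I A B) = mmul I (madj B) (madj A)"
  unfolding mmul_def madj_def by (auto intro!: ext simp: mult.commute)

lemma madj_madj [simp]: "madj (madj A) = A"
  unfolding madj_def by simp

lemma mmul_mone_left: "finite I \<Longrightarrow> i \<in> I \<Longrightarrow> mmul I mone B i j = B i j"
  unfolding mmul_def mone_def by (simp add: if_distrib[of "\<lambda>x. x * _"] cong: if_cong)

lemma mmul_mone_right: "finite I \<Longrightarrow> j \<in> I \<Longrightarrow> mmul I B mone i j = B i j"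
  unfolding mmul_def mone_def by (simp add: if_distrib[of "\<lambda>x. _ * x"] cong: if_cong)

lemma mmul_cong_on:
  "eq_on I A A' \<Longrightarrow> eq_on I B B' \<Longrightarrow> eq_on I (mmul I A B) (mmul I A' B')"
  unfolding eq_on_def mmul_def by auto

lemma eq_on_trans [trans]: "eq_on I A B \<Longrightarrow> eq_on I B C \<Longrightarrow> eq_on I A C"
  unfolding eq_on_def by auto

lemma eq_on_refl [simp]: "eq_on I A A"
  unfolding eq_on_def by auto

lemma eq_eq_on_trans [trans]: "A = B \<Longrightarrow> eq_on I B C \<Longrightarrow> eq_on I A C"
  by simp

lemma mmul_mone_left_on: "finite I \<Longrightarrow> eq_on I X mone \<Longrightarrow> eq_on I (mmul I X B) B"
  using mmul_cong_on[of I X mone B B] mmul_mone_left[of I] unfolding eq_on_def by auto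

lemma hermitian_on_subset: "hermitian_on I A \<Longrightarrow> J \<subseteq> I \<Longrightarrow> hermitian_on J A"
  unfolding hermitian_on_def by blast

lemma hermitian_on_iff_madj: "hermitian_on I A \<longleftrightarrow> eq_on I (madj A) A"
  unfolding hermitian_on_def eq_on_def madj_def by (metis complex_cnj_cnj)

lemma unitary_on_mmul:
  assumes "finite I" "unitary_on I W" "unitary_on I Q"
  shows "unitary_on I (mmul I W Q)"
proof -
  have "mmul I (madj (mmul I W Q)) (mmul I W Q) = mmul I (madj Q) (mmul I (mmul I (madj W) W) Q)"
    using assms(1) by (simp add: madj_mmul mmul_assoc)
  also have "eq_on I \<dots> (mmul I (madj Q) Q)"
    using assms by (intro mmul_cong_on mmul_mone_left_on) (auto simp: unitary_on_def)
  also have "eq_on I \<dots> mone"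
    using assms(3) by (simp add: unitary_on_def)
  finally have 1: "eq_on I (mmul I (madj (mmul I W Q)) (mmul I W Q)) mone" .
  have "mmul I (mmul I W Q) (madj (mmul I W Q)) = mmul I W (mmul I (mmul I Q (madj Q)) (madj W))"
    using assms(1) by (simp add: madj_mmul mmul_assoc)
  also have "eq_on I \<dots> (mmul I W (madj W))"
    using assms by (intro mmul_cong_on mmul_mone_left_on) (auto simp: unitary_on_def)
  also have "eq_on I \<dots> mone"
    using assms(2) by (simp add: unitary_on_def)
  finally show ?thesis
    using 1 by (simp add: unitary_on_def)
qed

lemma hermitian_on_conj:
  assumes "finite I" "hermitian_on I A"
  shows "hermitian_on I (mmul I (madj W) (mmul I A W))"
proof -
  have "madj (mmul I (madj W) (mmul I A W)) = mmul I (madj W) (mmul I (madj A) W)"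
    using assms(1) by (simp add: madj_mmul mmul_assoc)
  also have "eq_on I \<dots> (mmul I (madj W) (mmul I A W))"
    using assms(2) by (intro mmul_cong_on) (simp_all add: hermitian_on_iff_madj)
  finally show ?thesis
    by (simp add: hermitian_on_iff_madj)
qed

section \<open>The spectral theorem for Hermitian matrices\<close>

lemma eigenvector_exists:
  fixes A :: "'a cmat"
  assumes fin: "finite I" and ne: "I \<noteq> {}"
  shows "\<exists>e x. (\<exists>i\<in>I. x i \<noteq> 0) \<and> (\<forall>i\<in>I. (\<Sum>j\<in>I. A i j * x j) = e * x i)"
proof -
  define n where "n = card I"
  obtain g where g: "bij_betw g {0..<n} I"
    using ex_bij_betw_nat_finite[OF fin] n_def by blast
  define h where "h = inv_into {0..<n} g"
  have hg: "\<And>p. p < n \<Longrightarrow> h (g p) = p" and gh: "\<And>i. i \<in> I \<Longrightarrow> g (h i) = i \<and> h i < n"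
    unfolding h_def using g by (auto simp: bij_betw_def f_inv_into_f inv_into_into)
  define M where "M = mat n n (\<lambda>(p, q). A (g p) (g q))"
  have M: "M \<in> carrier_mat n n"
    unfolding M_def by simp
  obtain es where es: "char_poly M = (\<Prod>a\<leftarrow>es. [:- a, 1:])" "length es = n"
    using char_poly_factorized[OF M] by blast
  obtain e es' where "es = e # es'"
    using es(2) fin ne n_def by (cases es) auto
  then have "eigenvalue M e"
    using eigenvalue_root_char_poly[OF M] es(1) by simp
  then obtain v where "eigenvector M v e"
    unfolding eigenvalue_def by blast
  then have v: "v \<in> carrier_vec n" "v \<noteq> 0\<^sub>v n" "M *\<^sub>v v = e \<cdot>\<^sub>v v"
    using M unfolding eigenvector_def by auto
  obtain q where q: "q < n" "v $ q \<noteq> 0"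
    using v(1,2) by (metis eq_vecI index_zero_vec carrier_vecD)
  define x where "x i = v $ h i" for i
  have "g q \<in> I" "x (g q) \<noteq> 0"
    using q g hg unfolding x_def by (auto simp: bij_betw_def)
  moreover have "(\<Sum>j\<in>I. A i j * x j) = e * x i" if i: "i \<in> I" for i
  proof -
    have "(\<Sum>j\<in>I. A i j * x j) = (\<Sum>p\<in>{0..<n}. A i (g p) * x (g p))"
      using sum.reindex_bij_betw[OF g, of "\<lambda>j. A i j * x j"] by simp
    also have "\<dots> = (\<Sum>p\<in>{0..<n}. M $$ (h i, p) * v $ p)"
      using gh[OF i] hg unfolding M_def x_def by (intro sum.cong) auto
    also have "\<dots> = (M *\<^sub>v v) $ h i"
      using M v(1) gh[OF i] by (simp add: mult_mat_vec_def scalar_prod_def row_def)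
    also have "\<dots> = e * x i"
      using v gh[OF i] unfolding x_def by simp
    finally show ?thesis .
  qed
  ultimately show ?thesis by blast
qed

lemma hermitian_unit_eigenvector:
  assumes fin: "finite I" and ne: "I \<noteq> {}" and herm: "hermitian_on I A"
  shows "\<exists>r x. (\<Sum>i\<in>I. (cmod (x i))\<^sup>2) = 1 \<and> (\<forall>i\<in>I. (\<Sum>j\<in>I. A i j * x j) = of_real r * x i)"
proof -
  obtain e x where x0: "\<exists>i\<in>I. x i \<noteq> 0" and ev: "\<forall>i\<in>I. (\<Sum>j\<in>I. A i j * x j) = e * x i"
    using eigenvector_exists[OF fin ne] by blast
  define n where "n = (\<Sum>i\<in>I. (cmod (x i))\<^sup>2)"
  have n: "n > 0"
    using x0 fin unfolding n_def by (auto intro: sum_pos2)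
  define q where "q = (\<Sum>i\<in>I. \<Sum>j\<in>I. cnj (x i) * A i j * x j)"
  have "q = (\<Sum>i\<in>I. cnj (x i) * (\<Sum>j\<in>I. A i j * x j))"
    unfolding q_def by (simp add: sum_distrib_left mult.assoc)
  also have "\<dots> = (\<Sum>i\<in>I. e * (cnj (x i) * x i))"
    using ev by (intro sum.cong) auto
  also have "\<dots> = e * of_real n"
    by (simp add: n_def sum_distrib_left cnj_mult_self)
  finally have q_e: "q = e * of_real n" .
  have "cnj q = (\<Sum>i\<in>I. \<Sum>j\<in>I. x i * A j i * cnj (x j))"
    unfolding q_def using herm by (auto simp: hermitian_on_def intro!: sum.cong)
  also have "\<dots> = q"
    unfolding q_def by (subst sum.swap) (simp add: mult_ac)
  finally have "cnj e = e"
    using n q_e by simp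
  then have e_real: "e = of_real (Re e)"
    using Reals_cnj_iff of_real_Re by metis
  define y where "y i = x i / of_real (sqrt n)" for i
  have "(\<Sum>i\<in>I. (cmod (y i))\<^sup>2) = 1"
    using n unfolding y_def n_def by (simp add: norm_divide power_divide sum_divide_distrib[symmetric])
  moreover have "(\<Sum>j\<in>I. A i j * y j) = of_real (Re e) * y i" if "i \<in> I" for i
    using ev that e_real unfolding y_def by (simp add: sum_divide_distrib[symmetric])
  ultimately show ?thesis by blast
qed

lemma reflection_unitary:
  fixes u :: "'a \<Rightarrow> complex" and \<kappa> :: real
  assumes fin: "finite I" and \<kappa>: "\<kappa> * (\<kappa> * (\<Sum>i\<in>I. (cmod (u i))\<^sup>2) - 2) = 0"
  shows "unitary_on I (\<lambda>i j. mone i j - of_real \<kappa> * u i * cnj (u j))"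
proof -
  define W where "W = (\<lambda>i j. mone i j - of_real \<kappa> * u i * cnj (u j))"
  define s where "s = (\<Sum>i\<in>I. (cmod (u i))\<^sup>2)"
  have "madj W = W"
    unfolding W_def madj_def mone_def by (auto intro!: ext)
  moreover have "mmul I W W i j = mone i j" if i: "i \<in> I" and j: "j \<in> I" for i j
  proof -
    have m1: "(\<Sum>k\<in>I. mone i k * mone k j) = mone i j"
      using mmul_mone_left[OF fin i] unfolding mmul_def .
    have m2: "(\<Sum>k\<in>I. cnj (u k) * mone k j) = cnj (u j)"
      using mmul_mone_right[OF fin j, of "\<lambda>_ k. cnj (u k)"] unfolding mmul_def .
    have m3: "(\<Sum>k\<in>I. mone i k * u k) = u i"
      using mmul_mone_left[OF fin i, of "\<lambda>k _. u k"] unfolding mmul_def .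
    have ss: "(\<Sum>k\<in>I. cnj (u k) * u k) = of_real s"
      unfolding s_def of_real_sum by (simp only: cnj_mult_self)
    have "mmul I W W i j = (\<Sum>k\<in>I. mone i k * mone k j) - of_real \<kappa> * u i * (\<Sum>k\<in>I. cnj (u k) * mone k j)
        - of_real \<kappa> * cnj (u j) * (\<Sum>k\<in>I. mone i k * u k)
        + of_real \<kappa> * of_real \<kappa> * u i * cnj (u j) * (\<Sum>k\<in>I. cnj (u k) * u k)"
      unfolding mmul_def W_def
      by (simp add: algebra_simps sum.distrib sum_subtractf sum_distrib_left)
    also have "\<dots> = mone i j + of_real (\<kappa> * (\<kappa> * s - 2)) * u i * cnj (u j)"
      unfolding m1 m2 m3 ss by (simp add: algebra_simps)
    finally show ?thesis
      using \<kappa> by (simp add: s_def)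
  qed
  ultimately show ?thesis
    unfolding unitary_on_def eq_on_def W_def by simp
qed

definition phase :: "complex \<Rightarrow> complex" where
  "phase z = (if z = 0 then 1 else z / of_real (cmod z))"

lemma cnj_phase_mult_phase: "cnj (phase z) * phase z = 1"
  unfolding phase_def by (simp add: cnj_mult_self norm_divide)

lemma cnj_mult_phase: "cnj z * phase z = of_real (cmod z)"
  unfolding phase_def by (simp add: cnj_mult_self power2_eq_square)

lemma cnj_phase_mult: "cnj (phase z) * z = of_real (cmod z)"
  using arg_cong[OF cnj_mult_phase[of z], of cnj] by (simp add: mult.commute)

lemma sum_norm_sq_sub_phase:
  assumes fin: "finite I" and i0: "i0 \<in> I" and unit: "(\<Sum>i\<in>I. (cmod (x i))\<^sup>2) = 1"
  shows "(\<Sum>i\<in>I. (cmod (x i - (if i = i0 then phase (x i0) else 0)))\<^sup>2) = 2 - 2 * cmod (x i0)"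
proof -
  let ?\<phi> = "phase (x i0)"
  have x_unit: "(\<Sum>i\<in>I. cnj (x i) * x i) = 1"
    by (simp only: cnj_mult_self of_real_sum[symmetric] unit) simp
  have "of_real (\<Sum>i\<in>I. (cmod (x i - (if i = i0 then ?\<phi> else 0)))\<^sup>2)
      = (\<Sum>i\<in>I. cnj (x i) * x i
          - (if i = i0 then cnj (x i0) * ?\<phi> + cnj ?\<phi> * x i0 - cnj ?\<phi> * ?\<phi> else 0))"
    unfolding of_real_sum cnj_mult_self[symmetric]
    by (rule sum.cong[OF refl]) (simp add: algebra_simps)
  also have "\<dots> = of_real (2 - 2 * cmod (x i0))"
    using fin i0 by (simp add: sum_subtractf x_unit cnj_phase_mult_phase cnj_mult_phase cnj_phase_mult)
  finally show ?thesis
    by (simp only: of_real_eq_iff)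
qed

text \<open>A Householder reflection \<open>1 - \<kappa> u u\<^sup>*\<close> with \<open>u = x - phase (x i0) e\<^sub>i\<^sub>0\<close>.\<close>

lemma unitary_with_column:
  assumes fin: "finite I" and i0: "i0 \<in> I" and unit: "(\<Sum>i\<in>I. (cmod (x i))\<^sup>2) = 1"
  shows "\<exists>W c. unitary_on I W \<and> (\<forall>i\<in>I. W i i0 = c * x i)"
proof -
  define \<phi> where "\<phi> = phase (x i0)"
  define u where "u i = x i - (if i = i0 then \<phi> else 0)" for i
  define s where "s = (\<Sum>i\<in>I. (cmod (u i))\<^sup>2)"
  have s: "s = 2 - 2 * cmod (x i0)"
    unfolding s_def u_def \<phi>_def by (rule sum_norm_sq_sub_phase[OF fin i0 unit])
  define \<kappa> where "\<kappa> = (if s = 0 then 0 else 2 / s)"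
  define W where "W = (\<lambda>i j. mone i j - of_real \<kappa> * u i * cnj (u j))"
  have "unitary_on I W"
    unfolding W_def by (rule reflection_unitary[OF fin]) (simp add: \<kappa>_def s_def[symmetric])
  moreover have "W i i0 = cnj \<phi> * x i" if i: "i \<in> I" for i
  proof (cases "s = 0")
    case True
    then have "u i = 0"
      using fin i unfolding s_def by (simp add: sum_nonneg_eq_0_iff)
    then have "x i = (if i = i0 then \<phi> else 0)"
      unfolding u_def by simp
    then show ?thesis
      using True cnj_phase_mult_phase unfolding W_def \<kappa>_def mone_def \<phi>_def by simp
  next
    case False
    have "cnj (x i0) = cnj (x i0) * (cnj \<phi> * \<phi>)"
      unfolding \<phi>_def cnj_phase_mult_phase by simp
    also have "\<dots> = cnj \<phi> * (cnj (x i0) * \<phi>)"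
      by (simp only: mult_ac)
    finally have "cnj (x i0) = cnj \<phi> * of_real (cmod (x i0))"
      unfolding \<phi>_def cnj_mult_phase .
    moreover have "cnj \<phi> * (of_real (cmod (x i0)) + of_real s / 2) = cnj \<phi>"
      by (simp add: s field_simps)
    ultimately have "cnj (u i0) = - of_real (s / 2) * cnj \<phi>"
      unfolding u_def by (simp add: algebra_simps)
    then have "W i i0 = mone i i0 + of_real (2 / s * (s / 2)) * u i * cnj \<phi>"
      using False unfolding W_def \<kappa>_def by (simp add: algebra_simps)
    also have "\<dots> = cnj \<phi> * x i"
      using False cnj_phase_mult_phase unfolding u_def mone_def \<phi>_def by (simp add: algebra_simps)
    finally show ?thesis .
  qed
  ultimately show ?thesis by blast
qed

lemma hermitian_deflation:
  assumes fin: "finite I" and i0: "i0 \<in> I" and herm: "hermitian_on I A"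
  shows "\<exists>W r. unitary_on I W \<and> hermitian_on I (mmul I (madj W) (mmul I A W)) \<and>
    (\<forall>i\<in>I. mmul I (madj W) (mmul I A W) i i0 = (if i = i0 then of_real r else 0))"
proof -
  obtain r x where unit: "(\<Sum>i\<in>I. (cmod (x i))\<^sup>2) = 1"
    and eig: "\<forall>i\<in>I. (\<Sum>j\<in>I. A i j * x j) = of_real r * x i"
    using hermitian_unit_eigenvector[OF fin _ herm] i0 by blast
  obtain W c where W: "unitary_on I W" and col: "\<forall>i\<in>I. W i i0 = c * x i"
    using unitary_with_column[OF fin i0 unit] by blast
  have AW: "mmul I A W k i0 = of_real r * W k i0" if "k \<in> I" for k
  proof -
    have "mmul I A W k i0 = c * (\<Sum>j\<in>I. A k j * x j)"
      unfolding mmul_def using col by (simp add: sum_distrib_left mult.left_commute)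
    then show ?thesis
      using eig col that by simp
  qed
  have "mmul I (madj W) (mmul I A W) i i0 = (if i = i0 then of_real r else 0)" if i: "i \<in> I" for i
  proof -
    have "mmul I (madj W) (mmul I A W) i i0 = of_real r * mmul I (madj W) W i i0"
      unfolding mmul_def[of I "madj W"] using AW by (simp add: sum_distrib_left mult.left_commute)
    then show ?thesis
      using W i i0 by (simp add: unitary_on_def eq_on_def mone_def)
  qed
  then show ?thesis
    using W hermitian_on_conj[OF fin herm] by blast
qed

definition block_diag_one :: "'a \<Rightarrow> 'a cmat \<Rightarrow> 'a cmat" where
  "block_diag_one i0 X = (\<lambda>i k. if i = i0 \<or> k = i0 then mone i k else X i k)"

lemma madj_block_diag_one: "madj (block_diag_one i0 X) = block_diag_one i0 (madj X)"
  unfolding block_diag_one_def madj_def mone_def by (auto intro!: ext)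

lemma mmul_block_diag_one:
  assumes "finite F" "i0 \<notin> F" "i \<in> insert i0 F" "j \<in> insert i0 F"
  shows "mmul (insert i0 F) (block_diag_one i0 X) (block_diag_one i0 Y) i j = block_diag_one i0 (mmul F X Y) i j"
  using assms by (auto simp: mmul_def block_diag_one_def mone_def intro!: sum.neutral sum.cong)

lemma unitary_on_block_diag_one:
  assumes "finite F" "i0 \<notin> F" "unitary_on F V"
  shows "unitary_on (insert i0 F) (block_diag_one i0 V)"
  using assms mmul_block_diag_one[OF assms(1,2)]
  unfolding unitary_on_def eq_on_def madj_block_diag_one
  by (auto simp: block_diag_one_def)

lemma eigen_block_diag_one:
  assumes fin: "finite F" and i0: "i0 \<notin> F"
    and col: "\<forall>i\<in>insert i0 F. B i i0 = (if i = i0 then of_real r else 0)"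
    and row: "\<forall>j\<in>insert i0 F. B i0 j = (if j = i0 then of_real r else 0)"
    and eig: "\<forall>i\<in>F. \<forall>k\<in>F. mmul F B V i k = of_real (lam k) * V i k"
    and i: "i \<in> insert i0 F" and k: "k \<in> insert i0 F"
  shows "mmul (insert i0 F) B (block_diag_one i0 V) i k = of_real ((lam(i0 := r)) k) * block_diag_one i0 V i k"
proof -
  have split: "mmul (insert i0 F) B (block_diag_one i0 V) i k
      = B i i0 * block_diag_one i0 V i0 k + (\<Sum>j\<in>F. B i j * block_diag_one i0 V j k)"
    unfolding mmul_def using fin i0 by simp
  show ?thesis
  proof (cases "k = i0")
    case True
    then have "(\<Sum>j\<in>F. B i j * block_diag_one i0 V j k) = 0"
      using i0 unfolding block_diag_one_def mone_def by (intro sum.neutral) auto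
    then show ?thesis
      using split True col i by (auto simp: block_diag_one_def mone_def)
  next
    case k_ne: False
    show ?thesis
    proof (cases "i = i0")
      case True
      then have "(\<Sum>j\<in>F. B i j * block_diag_one i0 V j k) = 0"
        using row i0 by (auto intro!: sum.neutral)
      then show ?thesis
        using split True k_ne row by (simp add: block_diag_one_def mone_def)
    next
      case False
      have "(\<Sum>j\<in>F. B i j * block_diag_one i0 V j k) = mmul F B V i k"
        using i0 k_ne unfolding mmul_def block_diag_one_def by (intro sum.cong) auto
      then show ?thesis
        using split False k_ne col eig i k by (simp add: block_diag_one_def mone_def)
    qed
  qed
qed

lemma eigen_unitary_conj:
  assumes fin: "finite I" and W: "unitary_on I W"
    and eig: "\<forall>i\<in>I. \<forall>k\<in>I. mmul I (mmul I (madj W) (mmul I A W)) Q i k = of_real (lam k) * Q i k"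
    and i: "i \<in> I" and k: "k \<in> I"
  shows "mmul I A (mmul I W Q) i k = of_real (lam k) * mmul I W Q i k"
proof -
  have "eq_on I (mmul I (mmul I W (madj W)) (mmul I A W)) (mmul I A W)"
    using W fin by (intro mmul_mone_left_on) (simp_all add: unitary_on_def)
  then have "eq_on I (mmul I (mmul I (mmul I W (madj W)) (mmul I A W)) Q) (mmul I (mmul I A W) Q)"
    by (rule mmul_cong_on) simp
  then have "mmul I A (mmul I W Q) i k = mmul I (mmul I (mmul I W (madj W)) (mmul I A W)) Q i k"
    using fin i k by (simp add: eq_on_def mmul_assoc)
  also have "\<dots> = mmul I W (mmul I (mmul I (madj W) (mmul I A W)) Q) i k"
    using fin by (simp add: mmul_assoc)
  also have "\<dots> = of_real (lam k) * mmul I W Q i k"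
    using eig k by (simp add: mmul_def[of I W] sum_distrib_left mult.left_commute)
  finally show ?thesis .
qed

theorem hermitian_spectral:
  assumes "finite I" "hermitian_on I A"
  shows "\<exists>V lam. unitary_on I V \<and> (\<forall>i\<in>I. \<forall>k\<in>I. mmul I A V i k = of_real (lam k) * V i k)"
  using assms
proof (induction I arbitrary: A rule: finite_induct)
  case empty
  then show ?case
    by (simp add: unitary_on_def eq_on_def)
next
  case (insert i0 F A)
  let ?I = "insert i0 F"
  obtain W r where W: "unitary_on ?I W" and herm: "hermitian_on ?I (mmul ?I (madj W) (mmul ?I A W))"
    and col: "\<forall>i\<in>?I. mmul ?I (madj W) (mmul ?I A W) i i0 = (if i = i0 then of_real r else 0)"
    using hermitian_deflation[of ?I i0 A] insert.hyps insert.prems by auto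
  define B where "B = mmul ?I (madj W) (mmul ?I A W)"
  have row: "\<forall>j\<in>?I. B i0 j = (if j = i0 then of_real r else 0)"
    using herm col unfolding B_def hermitian_on_def by (metis complex_cnj_complex_of_real complex_cnj_zero insertI1)
  obtain V lam where V: "unitary_on F V" and eig: "\<forall>i\<in>F. \<forall>k\<in>F. mmul F B V i k = of_real (lam k) * V i k"
    using insert.IH[of B] herm hermitian_on_subset[of ?I B F] unfolding B_def by blast
  have "unitary_on ?I (mmul ?I W (block_diag_one i0 V))"
    using unitary_on_mmul[OF _ W unitary_on_block_diag_one[OF insert.hyps V]] insert.hyps by simp
  moreover have "\<forall>i\<in>?I. \<forall>k\<in>?I. mmul ?I A (mmul ?I W (block_diag_one i0 V)) i k
      = of_real ((lam(i0 := r)) k) * mmul ?I W (block_diag_one i0 V) i k"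
    using eigen_unitary_conj[OF _ W] eigen_block_diag_one[OF insert.hyps col[folded B_def] row eig]
      insert.hyps unfolding B_def by blast
  ultimately show ?case by blast
qed

section \<open>Gibbs weights\<close>

definition row_bounded :: "'a set \<Rightarrow> 'a cmat \<Rightarrow> real \<Rightarrow> bool" where
  "row_bounded I A c \<longleftrightarrow> (\<forall>i\<in>I. (\<Sum>j\<in>I. cmod (A i j)) \<le> c)"

lemma row_bounded_subset:
  "row_bounded I A c \<Longrightarrow> finite I \<Longrightarrow> J \<subseteq> I \<Longrightarrow> row_bounded J A c"
  unfolding row_bounded_def by (meson order_trans subsetD sum_mono2 norm_ge_zero)

lemma row_bounded_mono: "row_bounded I A a \<Longrightarrow> a \<le> b \<Longrightarrow> row_bounded I A b"
  unfolding row_bounded_def by fastforce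

text \<open>Schur's test; for a Hermitian matrix the column sums equal the row sums.\<close>

lemma quadratic_form_le:
  assumes herm: "hermitian_on I B" and rb: "row_bounded I B c"
    and unit: "(\<Sum>i\<in>I. (cmod (v i))\<^sup>2) = 1"
  shows "cmod (\<Sum>i\<in>I. \<Sum>j\<in>I. cnj (v i) * B i j * v j) \<le> c"
proof -
  have rows: "(\<Sum>i\<in>I. \<Sum>j\<in>I. cmod (B i j) * (cmod (v i))\<^sup>2) \<le> c"
  proof -
    have "(\<Sum>i\<in>I. \<Sum>j\<in>I. cmod (B i j) * (cmod (v i))\<^sup>2) = (\<Sum>i\<in>I. (\<Sum>j\<in>I. cmod (B i j)) * (cmod (v i))\<^sup>2)"
      by (simp add: sum_distrib_right)
    also have "\<dots> \<le> (\<Sum>i\<in>I. c * (cmod (v i))\<^sup>2)"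
      using rb by (intro sum_mono mult_right_mono) (auto simp: row_bounded_def)
    finally show ?thesis
      using unit by (simp add: sum_distrib_left[symmetric])
  qed
  have cols: "(\<Sum>i\<in>I. \<Sum>j\<in>I. cmod (B i j) * (cmod (v j))\<^sup>2) \<le> c"
  proof -
    have "(\<Sum>i\<in>I. \<Sum>j\<in>I. cmod (B i j) * (cmod (v j))\<^sup>2) = (\<Sum>j\<in>I. \<Sum>i\<in>I. cmod (B j i) * (cmod (v j))\<^sup>2)"
      using herm unfolding hermitian_on_def by (subst sum.swap) (intro sum.cong refl, metis complex_mod_cnj)
    then show ?thesis
      using rows by simp
  qed
  have "cmod (\<Sum>i\<in>I. \<Sum>j\<in>I. cnj (v i) * B i j * v j)
      \<le> (\<Sum>i\<in>I. \<Sum>j\<in>I. cmod (B i j) * (cmod (v i) * cmod (v j)))"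
    by (rule order_trans[OF norm_sum sum_mono], rule order_trans[OF norm_sum])
      (simp add: norm_mult mult_ac)
  also have "\<dots> \<le> (\<Sum>i\<in>I. \<Sum>j\<in>I. cmod (B i j) * (((cmod (v i))\<^sup>2 + (cmod (v j))\<^sup>2) / 2))"
  proof (intro sum_mono mult_left_mono)
    fix i j
    show "cmod (v i) * cmod (v j) \<le> ((cmod (v i))\<^sup>2 + (cmod (v j))\<^sup>2) / 2"
      using sum_squares_bound[of "cmod (v i)" "cmod (v j)"] by simp
  qed simp
  also have "\<dots> = ((\<Sum>i\<in>I. \<Sum>j\<in>I. cmod (B i j) * (cmod (v i))\<^sup>2)
      + (\<Sum>i\<in>I. \<Sum>j\<in>I. cmod (B i j) * (cmod (v j))\<^sup>2)) / 2"
    by (simp add: sum.distrib sum_divide_distrib distrib_left add_divide_distrib)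
  also have "\<dots> \<le> c"
    using rows cols by simp
  finally show ?thesis .
qed

lemma unitary_on_col_norm:
  assumes "unitary_on I V" "k \<in> I"
  shows "(\<Sum>i\<in>I. (cmod (V i k))\<^sup>2) = 1"
proof -
  have "(\<Sum>i\<in>I. cnj (V i k) * V i k) = 1"
    using assms unfolding unitary_on_def eq_on_def mmul_def madj_def mone_def by simp
  then show ?thesis
    unfolding cnj_mult_self of_real_sum[symmetric] by (simp only: of_real_eq_1_iff)
qed

lemma unitary_on_row_norm:
  assumes "unitary_on I V" "i \<in> I"
  shows "(\<Sum>k\<in>I. (cmod (V i k))\<^sup>2) = 1"
proof -
  have "(\<Sum>k\<in>I. cnj (V i k) * V i k) = 1"
    using assms unfolding unitary_on_def eq_on_def mmul_def madj_def mone_def by (simp add: mult.commute)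
  then show ?thesis
    unfolding cnj_mult_self of_real_sum[symmetric] by (simp only: of_real_eq_1_iff)
qed

lemma eigenvalue_eq_quadratic_form:
  assumes V: "unitary_on I V" and eig: "\<forall>i\<in>I. \<forall>k\<in>I. mmul I A V i k = of_real (lam k) * V i k"
    and k: "k \<in> I"
  shows "of_real (lam k) = (\<Sum>i\<in>I. \<Sum>j\<in>I. cnj (V i k) * A i j * V j k)"
proof -
  have "(\<Sum>i\<in>I. \<Sum>j\<in>I. cnj (V i k) * A i j * V j k) = (\<Sum>i\<in>I. cnj (V i k) * mmul I A V i k)"
    unfolding mmul_def by (simp add: sum_distrib_left mult.assoc)
  also have "\<dots> = of_real (lam k) * (\<Sum>i\<in>I. cnj (V i k) * V i k)"
    using eig k by (simp add: sum_distrib_left mult_ac)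
  also have "\<dots> = of_real (lam k)"
    using unitary_on_col_norm[OF V k] by (simp only: cnj_mult_self of_real_sum[symmetric]) simp
  finally show ?thesis ..
qed

lemma diagonal_eq_eigenvalue_average:
  assumes fin: "finite I" and V: "unitary_on I V"
    and eig: "\<forall>i\<in>I. \<forall>k\<in>I. mmul I A V i k = of_real (lam k) * V i k"
    and S: "S \<in> I"
  shows "A S S = of_real (\<Sum>k\<in>I. lam k * (cmod (V S k))\<^sup>2)"
proof -
  have "A S S = (\<Sum>R\<in>I. A S R * mone R S)"
    using mmul_mone_right[OF fin S, of A S] unfolding mmul_def by simp
  also have "\<dots> = (\<Sum>R\<in>I. A S R * mmul I V (madj V) R S)"
    using V S unfolding unitary_on_def eq_on_def by (intro sum.cong) auto
  also have "\<dots> = (\<Sum>k\<in>I. mmul I A V S k * cnj (V S k))"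
    unfolding mmul_def madj_def by (simp add: sum_distrib_left sum_distrib_right mult_ac) (rule sum.swap)
  also have "\<dots> = (\<Sum>k\<in>I. of_real (lam k) * (V S k * cnj (V S k)))"
    using eig S by (intro sum.cong) (auto simp: mult.assoc)
  also have "\<dots> = of_real (\<Sum>k\<in>I. lam k * (cmod (V S k))\<^sup>2)"
    by (simp only: of_real_sum of_real_mult complex_norm_square)
  finally show ?thesis .
qed

lemma le_exp_half: "x \<le> exp (x / 2)" for x :: real
proof (cases "x \<le> 0")
  case False
  have "x \<le> (1 + x / 4) * (1 + x / 4)"
    using zero_le_square[of "1 - x / 4"] by (simp add: algebra_simps)
  also have "\<dots> \<le> exp (x / 4) * exp (x / 4)"
    using False by (intro mult_mono exp_ge_add_one_self) auto
  also have "\<dots> = exp (x / 2)"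
    by (simp flip: exp_add)
  finally show ?thesis .
qed (use exp_gt_zero[of "x / 2"] in linarith)

lemma mult_exp_neg_le:
  fixes x n :: real
  assumes x: "x \<ge> 0" and n: "n \<ge> 1"
  shows "x * exp (- x) \<le> 2 * ln n * exp (- x) + 1 / n"
proof (cases "x \<le> 2 * ln n")
  case True
  then show ?thesis
    using n by (simp add: mult_right_mono add_increasing2)
next
  case False
  have "x * exp (- x) \<le> exp (x / 2) * exp (- x)"
    using le_exp_half[of x] by (intro mult_right_mono) auto
  also have "\<dots> = exp (- (x / 2))"
    by (simp flip: exp_add)
  also have "\<dots> \<le> exp (- ln n)"
    using False by simp
  also have "\<dots> = 1 / n"
    using n by (simp add: exp_minus inverse_eq_divide)
  finally show ?thesis
    using n by (simp add: add_increasing)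
qed

lemma exp_excess_le:
  fixes y l0 \<beta> n :: real
  assumes \<beta>: "\<beta> > 0" and n: "n \<ge> 1" and y: "l0 \<le> y"
  shows "(y - l0) * exp (- \<beta> * y) \<le> 2 * ln n / \<beta> * exp (- \<beta> * y) + exp (- \<beta> * l0) / (n * \<beta>)"
proof -
  define x where "x = \<beta> * (y - l0)"
  have x: "x \<ge> 0"
    unfolding x_def using \<beta> y by simp
  have ex: "exp (- \<beta> * y) = exp (- x) * exp (- \<beta> * l0)"
    unfolding x_def by (simp add: algebra_simps flip: exp_add)
  have "x * exp (- x) * (exp (- \<beta> * l0) / \<beta>) \<le> (2 * ln n * exp (- x) + 1 / n) * (exp (- \<beta> * l0) / \<beta>)"
    using mult_exp_neg_le[OF x n] \<beta> by (intro mult_right_mono) auto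
  moreover have "y - l0 = x / \<beta>"
    using \<beta> unfolding x_def by simp
  then have "(y - l0) * exp (- \<beta> * y) = x * exp (- x) * (exp (- \<beta> * l0) / \<beta>)"
    unfolding ex by simp
  moreover have "2 * ln n / \<beta> * exp (- \<beta> * y) + exp (- \<beta> * l0) / (n * \<beta>)
      = (2 * ln n * exp (- x) + 1 / n) * (exp (- \<beta> * l0) / \<beta>)"
    unfolding ex using \<beta> n by (simp add: field_simps)
  ultimately show ?thesis
    by simp
qed

lemma boltzmann_average_le:
  fixes lam :: "'a \<Rightarrow> real"
  assumes fin: "finite K" and ne: "K \<noteq> {}" and \<beta>: "\<beta> > 0"
  shows "(\<Sum>k\<in>K. exp (- \<beta> * lam k) * lam k)
      \<le> (Min (lam ` K) + (2 * ln (card K) + 1) / \<beta>) * (\<Sum>k\<in>K. exp (- \<beta> * lam k))"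
proof -
  define l0 where "l0 = Min (lam ` K)"
  define n where "n = real (card K)"
  define Z where "Z = (\<Sum>k\<in>K. exp (- \<beta> * lam k))"
  have n: "n \<ge> 1"
    using fin ne unfolding n_def by (simp add: Suc_le_eq card_gt_0_iff)
  have l0_le: "l0 \<le> lam k" if "k \<in> K" for k
    unfolding l0_def using fin that by auto
  have "l0 \<in> lam ` K"
    unfolding l0_def using fin ne by (intro Min_in) auto
  then obtain k0 where k0: "k0 \<in> K" "lam k0 = l0"
    by blast
  have "exp (- \<beta> * lam k0) \<le> Z"
    unfolding Z_def using fin k0(1) by (intro member_le_sum) auto
  then have Z_ge: "exp (- \<beta> * l0) \<le> Z"
    using k0(2) by simp
  have "(\<Sum>k\<in>K. exp (- \<beta> * lam k) * lam k) - l0 * Z = (\<Sum>k\<in>K. (lam k - l0) * exp (- \<beta> * lam k))"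
    unfolding Z_def by (simp add: algebra_simps sum_subtractf sum_distrib_left)
  also have "\<dots> \<le> (\<Sum>k\<in>K. 2 * ln n / \<beta> * exp (- \<beta> * lam k) + exp (- \<beta> * l0) / (n * \<beta>))"
    using exp_excess_le[OF \<beta> n l0_le] by (rule sum_mono)
  also have "\<dots> = 2 * ln n / \<beta> * Z + exp (- \<beta> * l0) / \<beta>"
    unfolding Z_def using n by (simp add: sum.distrib sum_distrib_left n_def)
  also have "\<dots> \<le> 2 * ln n / \<beta> * Z + Z / \<beta>"
    using Z_ge \<beta> by (simp add: divide_right_mono)
  finally show ?thesis
    using \<beta> unfolding l0_def n_def Z_def by (simp add: field_simps)
qed

text \<open>If \<open>V\<close> diagonalises \<open>A\<close> with eigenvalues \<open>lam\<close>, these are the diagonal entries of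
  \<open>exp (-\<beta> A) / tr exp (-\<beta> A)\<close>.\<close>

definition gibbs_weight :: "'a set \<Rightarrow> 'a cmat \<Rightarrow> ('a \<Rightarrow> real) \<Rightarrow> real \<Rightarrow> 'a \<Rightarrow> real" where
  "gibbs_weight I V lam \<beta> S =
     (\<Sum>k\<in>I. exp (- \<beta> * lam k) * (cmod (V S k))\<^sup>2) / (\<Sum>k\<in>I. exp (- \<beta> * lam k))"

lemma gibbs_weight_nonneg: "gibbs_weight I V lam \<beta> S \<ge> 0"
  unfolding gibbs_weight_def by (intro divide_nonneg_nonneg sum_nonneg) auto

lemma sum_gibbs_weight:
  assumes "finite I" "I \<noteq> {}" "unitary_on I V"
  shows "(\<Sum>S\<in>I. gibbs_weight I V lam \<beta> S) = 1"
proof -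
  have "(\<Sum>S\<in>I. \<Sum>k\<in>I. exp (- \<beta> * lam k) * (cmod (V S k))\<^sup>2) = (\<Sum>k\<in>I. exp (- \<beta> * lam k))"
    using unitary_on_col_norm[OF assms(3)]
    by (subst sum.swap) (simp add: sum_distrib_left[symmetric])
  moreover have "(\<Sum>k\<in>I. exp (- \<beta> * lam k)) > 0"
    using assms(1,2) by (intro sum_pos) auto
  ultimately show ?thesis
    unfolding gibbs_weight_def by (simp add: sum_divide_distrib[symmetric])
qed

lemma eigenvector_diagonal_mean_le:
  assumes fin: "finite I" and V: "unitary_on I V" and eig: "\<forall>i\<in>I. \<forall>k\<in>I. mmul I A V i k = of_real (lam k) * V i k"
    and A: "\<forall>i\<in>I. \<forall>j\<in>I. A i j = (if i = j then of_real (a j) else 0) + B i j"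
    and herm: "hermitian_on I B" and rb: "row_bounded I B c" and k: "k \<in> I"
  shows "(\<Sum>S\<in>I. (cmod (V S k))\<^sup>2 * a S) \<le> lam k + c"
proof -
  define q where "q = (\<Sum>i\<in>I. \<Sum>j\<in>I. cnj (V i k) * B i j * V j k)"
  have "of_real (lam k) = (\<Sum>i\<in>I. \<Sum>j\<in>I. cnj (V i k) * A i j * V j k)"
    by (rule eigenvalue_eq_quadratic_form[OF V eig k])
  also have "\<dots> = (\<Sum>i\<in>I. cnj (V i k) * of_real (a i) * V i k) + q"
    unfolding q_def using A fin
    by (simp add: distrib_left distrib_right sum.distrib if_distrib[of "\<lambda>x. _ * x"]
        if_distrib[of "\<lambda>x. x * _"] cong: if_cong)
  also have "(\<Sum>i\<in>I. cnj (V i k) * of_real (a i) * V i k) = of_real (\<Sum>S\<in>I. (cmod (V S k))\<^sup>2 * a S)"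
    unfolding of_real_sum of_real_mult complex_norm_square by (simp add: mult_ac)
  finally have "lam k = Re (of_real (\<Sum>S\<in>I. (cmod (V S k))\<^sup>2 * a S) + q)"
    by (metis Re_complex_of_real)
  moreover have "cmod q \<le> c"
    unfolding q_def by (rule quadratic_form_le[OF herm rb unitary_on_col_norm[OF V k]])
  ultimately show ?thesis
    using abs_Re_le_cmod[of q] by simp
qed

lemma Min_eigenvalue_le_diagonal:
  assumes fin: "finite I" and V: "unitary_on I V"
    and eig: "\<forall>i\<in>I. \<forall>k\<in>I. mmul I A V i k = of_real (lam k) * V i k"
    and A: "\<forall>i\<in>I. \<forall>j\<in>I. A i j = (if i = j then of_real (a j) else 0) + B i j"
    and rb: "row_bounded I B c" and S0: "S0 \<in> I"
  shows "Min (lam ` I) \<le> a S0 + c"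
proof -
  have "Min (lam ` I) = (\<Sum>k\<in>I. Min (lam ` I) * (cmod (V S0 k))\<^sup>2)"
    using unitary_on_row_norm[OF V S0] by (simp add: sum_distrib_left[symmetric])
  also have "\<dots> \<le> (\<Sum>k\<in>I. lam k * (cmod (V S0 k))\<^sup>2)"
    using fin by (intro sum_mono mult_right_mono) auto
  also have "\<dots> = Re (A S0 S0)"
    using diagonal_eq_eigenvalue_average[OF fin V eig S0] by simp
  also have "\<dots> = a S0 + Re (B S0 S0)"
    using A S0 by simp
  also have "Re (B S0 S0) \<le> cmod (B S0 S0)"
    by (rule complex_Re_le_cmod)
  also have "\<dots> \<le> (\<Sum>j\<in>I. cmod (B S0 j))"
    using fin S0 by (intro member_le_sum) auto
  also have "\<dots> \<le> c"
    using rb S0 unfolding row_bounded_def by blast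
  finally show ?thesis
    by simp
qed

lemma gibbs_weight_diagonal_le:
  assumes fin: "finite I" and S0: "S0 \<in> I" and \<beta>: "\<beta> > 0"
    and V: "unitary_on I V" and eig: "\<forall>i\<in>I. \<forall>k\<in>I. mmul I A V i k = of_real (lam k) * V i k"
    and A: "\<forall>i\<in>I. \<forall>j\<in>I. A i j = (if i = j then of_real (a j) else 0) + B i j"
    and herm: "hermitian_on I B" and rb: "row_bounded I B c"
  shows "(\<Sum>S\<in>I. gibbs_weight I V lam \<beta> S * a S) \<le> a S0 + 2 * c + (2 * ln (card I) + 1) / \<beta>"
proof -
  have ne: "I \<noteq> {}"
    using S0 by auto
  define w where "w k = exp (- \<beta> * lam k)" for k
  define Z where "Z = (\<Sum>k\<in>I. w k)"
  have Z: "Z > 0"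
    unfolding Z_def w_def using fin ne by (intro sum_pos) auto
  have "(\<Sum>S\<in>I. gibbs_weight I V lam \<beta> S * a S) = (\<Sum>S\<in>I. \<Sum>k\<in>I. w k * ((cmod (V S k))\<^sup>2 * a S)) / Z"
    unfolding gibbs_weight_def w_def[symmetric] Z_def[symmetric]
    by (simp add: sum_divide_distrib sum_distrib_left sum_distrib_right mult_ac)
  also have "\<dots> = (\<Sum>k\<in>I. w k * (\<Sum>S\<in>I. (cmod (V S k))\<^sup>2 * a S)) / Z"
    by (subst sum.swap) (simp add: sum_distrib_left)
  also have "\<dots> \<le> (\<Sum>k\<in>I. w k * (lam k + c)) / Z"
    using Z eigenvector_diagonal_mean_le[OF fin V eig A herm rb] unfolding w_def
    by (intro divide_right_mono sum_mono mult_left_mono) auto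
  also have "\<dots> = (\<Sum>k\<in>I. w k * lam k) / Z + c"
    using Z unfolding Z_def by (simp add: distrib_left sum.distrib sum_distrib_right[symmetric] add_divide_distrib)
  also have "\<dots> \<le> Min (lam ` I) + (2 * ln (card I) + 1) / \<beta> + c"
    using boltzmann_average_le[OF fin ne \<beta>, of lam] Z unfolding Z_def w_def by (simp add: pos_divide_le_eq)
  also have "\<dots> \<le> a S0 + 2 * c + (2 * ln (card I) + 1) / \<beta>"
    using Min_eigenvalue_le_diagonal[OF fin V eig A rb S0] by simp
  finally show ?thesis .
qed

section \<open>Operators on the fermionic Fock space\<close>

lemma op_mult_eq_mmul: "op_mult M = mmul (Pow {0..<M})"
  unfolding op_mult_def mmul_def by (intro ext) simp

lemma op_id_eq_mone: "op_id = mone"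
  unfolding op_id_def mone_def ..

lemma mmul_op_smult: "mmul I (op_smult c A) B = (\<lambda>i k. c * mmul I A B i k)"
  unfolding mmul_def op_smult_def by (simp add: sum_distrib_left mult.assoc)

definition diagonal_on :: "'a set \<Rightarrow> 'a cmat \<Rightarrow> ('a \<Rightarrow> complex) \<Rightarrow> bool" where
  "diagonal_on I A f \<longleftrightarrow> (\<forall>i\<in>I. \<forall>j\<in>I. A i j = (if i = j then f j else 0))"

lemma diagonal_on_mmul:
  assumes "finite I" "diagonal_on I A f" "diagonal_on I B g"
  shows "diagonal_on I (mmul I A B) (\<lambda>S. f S * g S)"
  using assms unfolding diagonal_on_def mmul_def
  by (auto simp: if_distrib[of "\<lambda>x. x * _"] if_distrib[of "\<lambda>x. _ * x"] cong: if_cong)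

lemma diagonal_on_op_mult:
  "diagonal_on (Pow {0..<M}) A f \<Longrightarrow> diagonal_on (Pow {0..<M}) B g
    \<Longrightarrow> diagonal_on (Pow {0..<M}) (op_mult M A B) (\<lambda>S. f S * g S)"
  unfolding op_mult_eq_mmul by (rule diagonal_on_mmul) simp_all

lemma diagonal_on_op_add:
  "diagonal_on I A f \<Longrightarrow> diagonal_on I B g \<Longrightarrow> diagonal_on I (op_add A B) (\<lambda>S. f S + g S)"
  unfolding diagonal_on_def op_add_def by auto

lemma diagonal_on_op_smult: "diagonal_on I A f \<Longrightarrow> diagonal_on I (op_smult c A) (\<lambda>S. c * f S)"
  unfolding diagonal_on_def op_smult_def by auto

lemma diagonal_on_op_sum:
  "(\<And>x. x \<in> X \<Longrightarrow> diagonal_on I (F x) (f x)) \<Longrightarrow> diagonal_on I (op_sum F X) (\<lambda>S. \<Sum>x\<in>X. f x S)"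
  unfolding diagonal_on_def op_sum_def by (auto intro: sum.neutral)

lemma diagonal_on_op_id: "diagonal_on I op_id (\<lambda>S. 1)"
  unfolding diagonal_on_def op_id_def by auto

lemma diagonal_on_cong: "diagonal_on I A f \<Longrightarrow> (\<And>S. S \<in> I \<Longrightarrow> f S = g S) \<Longrightarrow> diagonal_on I A g"
  unfolding diagonal_on_def by auto

lemma op_mult_diagonal_on:
  assumes "diagonal_on (Pow {0..<M}) A f" "S \<in> Pow {0..<M}"
  shows "op_mult M A B S S = f S * B S S"
proof -
  have "op_mult M A B S S = (\<Sum>R\<in>Pow {0..<M}. if R = S then f S * B S S else 0)"
    unfolding op_mult_def using assms unfolding diagonal_on_def by (intro sum.cong) auto
  then show ?thesis
    using assms(2) by simp
qed

lemma row_bounded_op_smult: "row_bounded I A a \<Longrightarrow> row_bounded I (op_smult c A) (cmod c * a)"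
  unfolding row_bounded_def op_smult_def
  by (auto simp: norm_mult sum_distrib_left[symmetric] intro!: mult_left_mono)

lemma row_bounded_op_sum:
  assumes "\<And>x. x \<in> X \<Longrightarrow> row_bounded I (F x) (a x)"
  shows "row_bounded I (op_sum F X) (\<Sum>x\<in>X. a x)"
  unfolding row_bounded_def op_sum_def
proof
  fix i assume i: "i \<in> I"
  have "(\<Sum>j\<in>I. cmod (\<Sum>x\<in>X. F x i j)) \<le> (\<Sum>x\<in>X. \<Sum>j\<in>I. cmod (F x i j))"
    by (subst sum.swap) (intro sum_mono norm_sum)
  also have "\<dots> \<le> (\<Sum>x\<in>X. a x)"
    using assms i unfolding row_bounded_def by (intro sum_mono) auto
  finally show "(\<Sum>j\<in>I. cmod (\<Sum>x\<in>X. F x i j)) \<le> (\<Sum>x\<in>X. a x)" .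
qed

definition number_conserving :: "nat \<Rightarrow> fop \<Rightarrow> bool" where
  "number_conserving M A \<longleftrightarrow>
     (\<forall>T\<in>Pow {0..<M}. \<forall>S\<in>Pow {0..<M}. card T \<noteq> card S \<longrightarrow> A T S = 0)"

lemma number_conserving_diagonal: "diagonal_on (Pow {0..<M}) A f \<Longrightarrow> number_conserving M A"
  unfolding diagonal_on_def number_conserving_def by auto

lemma number_conserving_op_add:
  "number_conserving M A \<Longrightarrow> number_conserving M B \<Longrightarrow> number_conserving M (op_add A B)"
  unfolding number_conserving_def op_add_def by auto

lemma number_conserving_op_smult: "number_conserving M A \<Longrightarrow> number_conserving M (op_smult c A)"
  unfolding number_conserving_def op_smult_def by auto

lemma number_conserving_op_sum:
  "(\<And>x. x \<in> X \<Longrightarrow> number_conserving M (F x)) \<Longrightarrow> number_conserving M (op_sum F X)"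
  unfolding number_conserving_def op_sum_def by (auto intro!: sum.neutral)

definition sector :: "nat \<Rightarrow> nat \<Rightarrow> nat set set" where
  "sector M N = {S \<in> Pow {0..<M}. card S = N}"

lemma finite_sector [simp]: "finite (sector M N)"
  unfolding sector_def by simp

lemma sector_subset: "sector M N \<subseteq> Pow {0..<M}"
  unfolding sector_def by auto

lemma op_pow_sector:
  assumes nc: "number_conserving M X" and V: "unitary_on (sector M N) V"
    and eig: "\<forall>i\<in>sector M N. \<forall>k\<in>sector M N. mmul (sector M N) X V i k = \<mu> k * V i k"
  shows "\<forall>T\<in>sector M N. \<forall>S\<in>sector M N.
    op_pow M X n T S = (\<Sum>k\<in>sector M N. \<mu> k ^ n * V T k * cnj (V S k))"
proof (induction n)
  case 0
  then show ?case
    using V by (auto simp: op_id_eq_mone unitary_on_def eq_on_def mmul_def madj_def mult.assoc)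
next
  case (Suc n)
  let ?K = "sector M N"
  show ?case
  proof (intro ballI)
    fix T S assume T: "T \<in> ?K" and S: "S \<in> ?K"
    have "op_pow M X (Suc n) T S = (\<Sum>R\<in>?K. X T R * op_pow M X n R S)"
      unfolding op_pow.simps op_mult_def
    proof (rule sum.mono_neutral_right)
      show "\<forall>R\<in>Pow {0..<M} - ?K. X T R * op_pow M X n R S = 0"
      proof
        fix R assume R: "R \<in> Pow {0..<M} - ?K"
        then have "card T \<noteq> card R"
          using T by (auto simp: sector_def)
        then show "X T R * op_pow M X n R S = 0"
          using nc T R unfolding number_conserving_def sector_def by auto
      qed
    qed (simp_all add: sector_subset)
    also have "\<dots> = (\<Sum>R\<in>?K. X T R * (\<Sum>k\<in>?K. \<mu> k ^ n * V R k * cnj (V S k)))"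
      using Suc.IH S by (intro sum.cong) auto
    also have "\<dots> = (\<Sum>k\<in>?K. \<mu> k ^ n * mmul ?K X V T k * cnj (V S k))"
      unfolding mmul_def by (simp add: sum_distrib_left sum_distrib_right mult_ac) (rule sum.swap)
    also have "\<dots> = (\<Sum>k\<in>?K. \<mu> k ^ Suc n * V T k * cnj (V S k))"
      using eig T by (intro sum.cong) (auto simp: mult_ac)
    finally show "op_pow M X (Suc n) T S = (\<Sum>k\<in>?K. \<mu> k ^ Suc n * V T k * cnj (V S k))" .
  qed
qed

lemma op_exp_sector:
  assumes "number_conserving M X" "unitary_on (sector M N) V"
    and "\<forall>i\<in>sector M N. \<forall>k\<in>sector M N. mmul (sector M N) X V i k = \<mu> k * V i k"
    and "T \<in> sector M N" "S \<in> sector M N"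
  shows "op_exp M X T S = (\<Sum>k\<in>sector M N. exp (\<mu> k) * V T k * cnj (V S k))"
proof -
  have "(\<lambda>n. op_pow M X n T S / of_nat (fact n))
      = (\<lambda>n. \<Sum>k\<in>sector M N. \<mu> k ^ n / of_nat (fact n) * (V T k * cnj (V S k)))"
    using op_pow_sector[OF assms(1-3)] assms(4,5) by (auto simp: sum_divide_distrib mult_ac)
  moreover have "(\<lambda>n. \<Sum>k\<in>sector M N. \<mu> k ^ n / of_nat (fact n) * (V T k * cnj (V S k)))
      sums (\<Sum>k\<in>sector M N. exp (\<mu> k) * (V T k * cnj (V S k)))"
  proof (intro sums_sum sums_mult2)
    fix k
    show "(\<lambda>n. \<mu> k ^ n / of_nat (fact n)) sums exp (\<mu> k)"
      using exp_converges[of "\<mu> k"] by (simp add: scaleR_conv_of_real divide_inverse mult.commute)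
  qed
  ultimately show ?thesis
    unfolding op_exp_def by (simp add: sums_unique[symmetric] mult.assoc)
qed

lemma ann_nonzero: "ann m T S \<noteq> 0 \<Longrightarrow> m \<in> S \<and> T = S - {m}"
  unfolding ann_def by (simp split: if_splits)

lemma cre_nonzero: "cre m T S \<noteq> 0 \<Longrightarrow> m \<in> T \<and> S = T - {m}"
  unfolding cre_def using ann_nonzero by fastforce

lemma cmod_ann_le: "cmod (ann m T S) \<le> 1"
  unfolding ann_def by (simp add: norm_power)

lemma cmod_cre_le: "cmod (cre m T S) \<le> 1"
  unfolding cre_def using cmod_ann_le by simp

lemma cre_ann_eq:
  "op_mult M (cre a) (ann b) T S =
     (if T - {a} \<in> Pow {0..<M} then cre a T (T - {a}) * ann b (T - {a}) S else 0)"
proof -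
  have "op_mult M (cre a) (ann b) T S
      = (\<Sum>R\<in>Pow {0..<M}. if R = T - {a} then cre a T (T - {a}) * ann b (T - {a}) S else 0)"
    unfolding op_mult_def by (intro sum.cong) (auto dest: cre_nonzero)
  then show ?thesis
    by simp
qed

lemma cre_ann_nonzero:
  assumes "op_mult M (cre a) (ann b) T S \<noteq> 0"
  shows "a \<in> T" "b \<in> S" "T - {a} = S - {b}"
  using assms unfolding cre_ann_eq by (auto split: if_splits dest!: cre_nonzero ann_nonzero)

lemma cnj_cre_ann: "cnj (op_mult M (cre a) (ann b) T S) = op_mult M (cre b) (ann a) S T"
  unfolding op_mult_def cre_def by (simp add: mult.commute)

lemma number_conserving_cre_ann: "number_conserving M (op_mult M (cre a) (ann b))"
  unfolding number_conserving_def
proof (intro ballI impI)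
  fix T S assume T: "T \<in> Pow {0..<M}" and S: "S \<in> Pow {0..<M}" and card: "card T \<noteq> card S"
  show "op_mult M (cre a) (ann b) T S = 0"
  proof (rule ccontr)
    assume "op_mult M (cre a) (ann b) T S \<noteq> 0"
    note hop = cre_ann_nonzero[OF this]
    have "finite T" "finite S"
      using T S finite_subset by auto
    then have "Suc (card (T - {a})) = card T" "Suc (card (S - {b})) = card S"
      using hop(1,2) by (simp_all only: card_Suc_Diff1)
    then show False
      using card hop(3) by simp
  qed
qed

lemma row_bounded_cre_ann: "row_bounded (Pow {0..<M}) (op_mult M (cre a) (ann b)) 1"
  unfolding row_bounded_def
proof
  fix T
  have "cmod (op_mult M (cre a) (ann b) T S) \<le> (if S = insert b (T - {a}) then 1 else 0)" for S
  proof (cases "op_mult M (cre a) (ann b) T S = 0")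
    case False
    then have "S = insert b (T - {a})"
      using cre_ann_nonzero[OF False] by blast
    then show ?thesis
      unfolding cre_ann_eq using cmod_ann_le cmod_cre_le
      by (auto simp: norm_mult intro: mult_le_one)
  qed simp
  then have "(\<Sum>S\<in>Pow {0..<M}. cmod (op_mult M (cre a) (ann b) T S))
      \<le> (\<Sum>S\<in>Pow {0..<M}. if S = insert b (T - {a}) then 1 else 0)"
    by (rule sum_mono)
  also have "\<dots> \<le> 1"
    by simp
  finally show "(\<Sum>S\<in>Pow {0..<M}. cmod (op_mult M (cre a) (ann b) T S)) \<le> 1" .
qed

lemma of_real_of_bool [simp]: "of_real (of_bool b) = of_bool b"
  by (cases b) simp_all

lemma diagonal_on_cre_ann_self: "diagonal_on (Pow {0..<M}) (op_mult M (cre m) (ann m)) (\<lambda>S. of_bool (m \<in> S))"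
  unfolding diagonal_on_def
proof (intro ballI)
  fix T S assume T: "T \<in> Pow {0..<M}" and S: "S \<in> Pow {0..<M}"
  show "op_mult M (cre m) (ann m) T S = (if T = S then of_bool (m \<in> S) else 0)"
  proof (cases "m \<in> T")
    case True
    then have "T - {m} = S - {m} \<and> m \<in> S \<longleftrightarrow> T = S"
      by blast
    then show ?thesis
      using T True unfolding cre_ann_eq by (auto simp: cre_def ann_def simp flip: power_mult_distrib)
  next
    case False
    then show ?thesis
      using T unfolding cre_ann_eq by (auto simp: cre_def ann_def)
  qed
qed

section \<open>The Hubbard Hamiltonian\<close>

lemma sum_offdiag_swap:
  assumes "finite B"
  shows "(\<Sum>x\<in>B. \<Sum>y\<in>B - {x}. g y x) = (\<Sum>x\<in>B. \<Sum>y\<in>B - {x}. g x y)"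
proof -
  have "(\<Sum>x\<in>B. \<Sum>y\<in>B - {x}. g y x) = (\<Sum>x\<in>B. \<Sum>y\<in>{y \<in> B. x \<noteq> y}. g y x)"
    by (intro sum.cong) auto
  also have "\<dots> = (\<Sum>y\<in>B. \<Sum>x\<in>{x \<in> B. x \<noteq> y}. g y x)"
    by (rule sum.swap_restrict[OF assms assms])
  also have "\<dots> = (\<Sum>y\<in>B. \<Sum>x\<in>B - {y}. g y x)"
    by (intro sum.cong) auto
  finally show ?thesis .
qed

lemma bonds_eq_image: "bonds L d = (\<lambda>(s, i). {s, shift L s i}) ` (sites L d \<times> {..<d})"
  unfolding bonds_def by auto

lemma finite_bond: "B \<in> bonds L d \<Longrightarrow> finite B"
  unfolding bonds_def by auto

lemma card_bonds_le: "card (bonds L d) \<le> L ^ d * d"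
proof -
  have "card (bonds L d) \<le> card (sites L d \<times> {..<d})"
    unfolding bonds_eq_image by (rule card_image_le) (simp add: sites_def)
  also have "\<dots> = L ^ d * d"
    by (simp add: sites_def card_cartesian_product)
  finally show ?thesis .
qed

lemma hermitian_on_hopping: "hermitian_on (Pow {0..<nmodes L d}) (hopping L d t)"
  unfolding hermitian_on_def
proof (intro ballI)
  fix T S
  let ?M = "nmodes L d"
  have "cnj (hopping L d t T S) = - of_real t * (\<Sum>B\<in>bonds L d. \<Sum>\<sigma>\<in>{Up, Dn}. \<Sum>x\<in>B. \<Sum>y\<in>B - {x}.
      op_mult ?M (cre (mode y \<sigma>)) (ann (mode x \<sigma>)) S T)"
    unfolding hopping_def op_smult_def op_sum_def by (simp add: cnj_cre_ann)
  also have "\<dots> = hopping L d t S T"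
    unfolding hopping_def op_smult_def op_sum_def
    using finite_bond by (intro arg_cong2[where f = "(*)"] refl sum.cong sum_offdiag_swap) auto
  finally show "cnj (hopping L d t T S) = hopping L d t S T" .
qed

lemma number_conserving_hopping: "number_conserving (nmodes L d) (hopping L d t)"
  unfolding hopping_def
  by (intro number_conserving_op_smult number_conserving_op_sum number_conserving_cre_ann)

lemma row_bounded_hopping:
  "row_bounded (Pow {0..<nmodes L d}) (hopping L d t) (4 * \<bar>t\<bar> * (real (L ^ d) * real d))"
proof -
  define n where "n = (\<Sum>B\<in>bonds L d. \<Sum>\<sigma>\<in>{Up, Dn}. \<Sum>x\<in>B. \<Sum>y\<in>B - {x}. (1::real))"
  have "n \<le> (\<Sum>B\<in>bonds L d. 4)"
    unfolding n_def
  proof (rule sum_mono)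
    fix B assume "B \<in> bonds L d"
    then obtain s s' where "B = {s, s'}"
      unfolding bonds_def by auto
    then show "(\<Sum>\<sigma>\<in>{Up, Dn}. \<Sum>x\<in>B. \<Sum>y\<in>B - {x}. (1::real)) \<le> 4"
      by (cases "s = s'") auto
  qed
  also have "\<dots> \<le> 4 * (real (L ^ d) * real d)"
    using card_bonds_le[of L d] by (simp add: of_nat_le_iff[symmetric, where 'a=real])
  finally have n: "n \<le> 4 * (real (L ^ d) * real d)" .
  have "row_bounded (Pow {0..<nmodes L d}) (hopping L d t) (cmod (- complex_of_real t) * n)"
    unfolding hopping_def n_def
    by (intro row_bounded_op_smult row_bounded_op_sum row_bounded_cre_ann)
  then show ?thesis
    by (rule row_bounded_mono) (use mult_left_mono[OF n, of "\<bar>t\<bar>"] in simp)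
qed

definition double_occupancy :: "nat \<Rightarrow> nat \<Rightarrow> nat set \<Rightarrow> real" where
  "double_occupancy L d S = (\<Sum>x\<in>sites L d. of_bool (mode x Up \<in> S) * of_bool (mode x Dn \<in> S))"

definition staggered_moment :: "nat \<Rightarrow> nat \<Rightarrow> nat set \<Rightarrow> real" where
  "staggered_moment L d S =
     (\<Sum>x\<in>sites L d. Re (eta L d x) / 2 * (of_bool (mode x Up \<in> S) - of_bool (mode x Dn \<in> S)))"

lemma eta_eq_of_real: "eta L d x = of_real (Re (eta L d x))"
  unfolding eta_def by (simp add: complex_eq_iff)

lemma abs_Re_eta: "\<bar>Re (eta L d x)\<bar> = 1"
  unfolding eta_def by (simp add: complex_eq_iff)

lemma diagonal_on_num: "diagonal_on (Pow {0..<nmodes L d}) (num L d x \<sigma>) (\<lambda>S. of_bool (mode x \<sigma> \<in> S))"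
  unfolding num_def by (rule diagonal_on_cre_ann_self)

lemma diagonal_on_double_occ:
  "diagonal_on (Pow {0..<nmodes L d}) (double_occ L d) (\<lambda>S. of_real (double_occupancy L d S))"
  unfolding double_occ_def
  by (rule diagonal_on_cong[OF diagonal_on_op_sum[OF diagonal_on_op_mult[OF diagonal_on_num diagonal_on_num]]])
    (simp add: double_occupancy_def)

lemma diagonal_on_stag_mag:
  "diagonal_on (Pow {0..<nmodes L d}) (stag_mag L d) (\<lambda>S. of_real (staggered_moment L d S))"
  unfolding stag_mag_def
  by (rule diagonal_on_cong[OF diagonal_on_op_sum[OF diagonal_on_op_smult[OF
        diagonal_on_op_add[OF diagonal_on_num diagonal_on_op_smult[OF diagonal_on_num]]]]])
    (subst eta_eq_of_real, simp add: staggered_moment_def)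

lemma abs_staggered_moment_le: "\<bar>staggered_moment L d S\<bar> \<le> real (L ^ d) / 2"
proof -
  have "\<bar>staggered_moment L d S\<bar>
      \<le> (\<Sum>x\<in>sites L d. \<bar>Re (eta L d x) / 2 * (of_bool (mode x Up \<in> S) - of_bool (mode x Dn \<in> S))\<bar>)"
    unfolding staggered_moment_def by (rule sum_abs)
  also have "\<dots> \<le> (\<Sum>x\<in>sites L d. 1 / 2)"
    by (intro sum_mono) (simp add: abs_mult abs_Re_eta)
  finally show ?thesis
    by (simp add: sites_def)
qed

lemma hubbard_H_eq:
  assumes "T \<in> Pow {0..<nmodes L d}" "S \<in> Pow {0..<nmodes L d}"
  shows "hubbard_H L d t U h T S =
    (if T = S then of_real (U * double_occupancy L d S - h * staggered_moment L d S) else 0)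
    + hopping L d t T S"
  using assms diagonal_on_double_occ[of L d] diagonal_on_stag_mag[of L d]
  unfolding hubbard_H_def op_add_def op_smult_def diagonal_on_def by auto

lemma number_conserving_hubbard_H: "number_conserving (nmodes L d) (hubbard_H L d t U h)"
  unfolding hubbard_H_def
  by (intro number_conserving_op_add number_conserving_op_smult number_conserving_hopping
      number_conserving_diagonal[OF diagonal_on_double_occ] number_conserving_diagonal[OF diagonal_on_stag_mag])

abbreviation half_filled :: "nat \<Rightarrow> nat \<Rightarrow> nat set set" where
  "half_filled L d \<equiv> sector (nmodes L d) (nsites L d)"

definition all_up :: "nat \<Rightarrow> nat \<Rightarrow> nat set" where
  "all_up L d = (\<lambda>x. mode x Up) ` sites L d"

lemma all_up_half_filled: "all_up L d \<in> half_filled L d"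
proof -
  have "inj_on (\<lambda>x. mode x Up) (sites L d)"
    unfolding mode_def by (auto intro: inj_onI)
  then show ?thesis
    unfolding sector_def all_up_def sites_def mode_def nmodes_def nsites_def
    by (auto simp: card_image)
qed

lemma double_occupancy_all_up: "double_occupancy L d (all_up L d) = 0"
proof -
  have "mode x Dn \<notin> all_up L d" for x
    unfolding all_up_def mode_def by auto presburger
  then show ?thesis
    unfolding double_occupancy_def by simp
qed

lemma hubbard_spectral:
  "\<exists>V lam. unitary_on (half_filled L d) V \<and>
     (\<forall>i\<in>half_filled L d. \<forall>k\<in>half_filled L d.
        mmul (half_filled L d) (hubbard_H L d t U h) V i k = of_real (lam k) * V i k)"
proof (rule hermitian_spectral)
  show "hermitian_on (half_filled L d) (hubbard_H L d t U h)"
    unfolding hermitian_on_def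
  proof (intro ballI)
    fix T S assume "T \<in> half_filled L d" "S \<in> half_filled L d"
    then have "T \<in> Pow {0..<nmodes L d}" "S \<in> Pow {0..<nmodes L d}"
      using sector_subset by blast+
    then show "cnj (hubbard_H L d t U h T S) = hubbard_H L d t U h S T"
      using hermitian_on_hopping[of L d t] by (auto simp: hubbard_H_eq hermitian_on_def)
  qed
qed simp

lemma ln_card_half_filled_le:
  assumes "L > 0"
  shows "2 * ln (card (half_filled L d)) + 1 \<le> 5 * real (L ^ d)"
proof -
  have "card (half_filled L d) > 0"
    using all_up_half_filled by (auto simp: card_gt_0_iff)
  moreover have "card (half_filled L d) \<le> 2 ^ (2 * L ^ d)"
    using card_mono[OF _ sector_subset, of "nmodes L d"] by (simp add: card_Pow nmodes_def)
  then have "real (card (half_filled L d)) \<le> 2 ^ (2 * L ^ d)"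
    by (metis of_nat_le_iff of_nat_numeral of_nat_power)
  ultimately have "ln (card (half_filled L d)) \<le> ln (2 ^ (2 * L ^ d))"
    by simp
  also have "\<dots> = real (2 * L ^ d) * ln 2"
    by (simp add: ln_realpow)
  also have "\<dots> \<le> real (2 * L ^ d)"
    using ln_2_less_1 by (intro mult_left_le) auto
  finally have "ln (card (half_filled L d)) \<le> 2 * real (L ^ d)"
    by simp
  moreover have "real (L ^ d) \<ge> 1"
    using assms by simp
  ultimately show ?thesis
    by linarith
qed

lemma double_occupancy_nonneg: "double_occupancy L d S \<ge> 0"
  unfolding double_occupancy_def by (intro sum_nonneg) simp

locale hubbard_eigenbasis =
  fixes L d :: nat and t U h :: real and V :: "nat set cmat" and lam :: "nat set \<Rightarrow> real"
  assumes unitary: "unitary_on (half_filled L d) V"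
    and eigen: "\<forall>i\<in>half_filled L d. \<forall>k\<in>half_filled L d.
      mmul (half_filled L d) (hubbard_H L d t U h) V i k = of_real (lam k) * V i k"
begin

abbreviation weight :: "real \<Rightarrow> nat set \<Rightarrow> real" where
  "weight \<beta> \<equiv> gibbs_weight (half_filled L d) V lam \<beta>"

lemma sum_weight: "(\<Sum>S\<in>half_filled L d. weight \<beta> S) = 1"
  using sum_gibbs_weight[OF finite_sector _ unitary] all_up_half_filled by blast

lemma diagonal_exp_hubbard:
  assumes S: "S \<in> half_filled L d"
  shows "op_exp (nmodes L d) (op_smult (- of_real \<beta>) (hubbard_H L d t U h)) S S
    = of_real ((\<Sum>k\<in>half_filled L d. exp (- \<beta> * lam k)) * weight \<beta> S)"
proof -
  let ?K = "half_filled L d"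
  have Z: "(\<Sum>k\<in>?K. exp (- \<beta> * lam k)) > 0"
    using all_up_half_filled by (intro sum_pos) auto
  have eigen_exponent: "\<forall>i\<in>?K. \<forall>k\<in>?K. mmul ?K (op_smult (- of_real \<beta>) (hubbard_H L d t U h)) V i k
      = of_real (- \<beta> * lam k) * V i k"
    using eigen by (simp add: mmul_op_smult)
  have "op_exp (nmodes L d) (op_smult (- of_real \<beta>) (hubbard_H L d t U h)) S S
      = (\<Sum>k\<in>?K. exp (of_real (- \<beta> * lam k)) * V S k * cnj (V S k))"
    by (rule op_exp_sector[OF number_conserving_op_smult[OF number_conserving_hubbard_H]
          unitary eigen_exponent S S])
  also have "\<dots> = of_real (\<Sum>k\<in>?K. exp (- \<beta> * lam k) * (cmod (V S k))\<^sup>2)"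
    by (simp only: exp_of_real) (simp only: of_real_sum of_real_mult complex_norm_square mult.assoc)
  also have "(\<Sum>k\<in>?K. exp (- \<beta> * lam k) * (cmod (V S k))\<^sup>2) = (\<Sum>k\<in>?K. exp (- \<beta> * lam k)) * weight \<beta> S"
    using Z unfolding gibbs_weight_def by simp
  finally show ?thesis .
qed

lemma gibbs_hf_diagonal:
  assumes Obs: "diagonal_on (Pow {0..<nmodes L d}) Obs f"
  shows "gibbs_hf L d t \<beta> U h Obs = (\<Sum>S\<in>half_filled L d. f S * of_real (weight \<beta> S))"
proof -
  let ?K = "half_filled L d" and ?M = "nmodes L d"
  define E where "E = op_exp ?M (op_smult (- of_real \<beta>) (hubbard_H L d t U h))"
  define Z where "Z = (\<Sum>k\<in>?K. exp (- \<beta> * lam k))"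
  have Z: "Z > 0"
    unfolding Z_def using all_up_half_filled by (intro sum_pos) auto
  have E: "E S S = of_real (Z * weight \<beta> S)" if "S \<in> ?K" for S
    using diagonal_exp_hubbard[OF that] unfolding E_def Z_def .
  have "trace_hf L d (op_mult ?M Obs E) = (\<Sum>S\<in>?K. f S * E S S)"
    unfolding trace_hf_def sector_def[symmetric]
    using sector_subset by (intro sum.cong refl op_mult_diagonal_on[OF Obs]) blast
  also have "\<dots> = of_real Z * (\<Sum>S\<in>?K. f S * of_real (weight \<beta> S))"
    using E by (simp add: sum_distrib_left mult_ac)
  finally have "trace_hf L d (op_mult ?M Obs E) = of_real Z * (\<Sum>S\<in>?K. f S * of_real (weight \<beta> S))" .
  moreover have "trace_hf L d E = of_real Z"
  proof -
    have "trace_hf L d E = (\<Sum>S\<in>?K. of_real (Z * weight \<beta> S))"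
      unfolding trace_hf_def sector_def[symmetric] using E by (intro sum.cong) auto
    also have "\<dots> = of_real (Z * (\<Sum>S\<in>?K. weight \<beta> S))"
      by (simp only: sum_distrib_left of_real_sum)
    finally show ?thesis
      by (simp add: sum_weight)
  qed
  ultimately show ?thesis
    using Z unfolding gibbs_hf_def E_def Let_def by simp
qed

lemma Re_gibbs_hf_diagonal:
  assumes "diagonal_on (Pow {0..<nmodes L d}) Obs (\<lambda>S. of_real (g S))"
  shows "Re (gibbs_hf L d t \<beta> U h Obs) = (\<Sum>S\<in>half_filled L d. weight \<beta> S * g S)"
  unfolding gibbs_hf_diagonal[OF assms] by (simp add: Re_sum mult.commute)

lemma gibbs_double_occupancy_le:
  assumes \<beta>: "\<beta> > 0"
  shows "U * (\<Sum>S\<in>half_filled L d. weight \<beta> S * double_occupancy L d S)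
    \<le> real (L ^ d) * (8 * \<bar>t\<bar> * real d + \<bar>h\<bar>) + (2 * ln (card (half_filled L d)) + 1) / \<beta>"
proof -
  let ?K = "half_filled L d" and ?N = "real (L ^ d)" and ?\<mu> = "weight \<beta>"
  define a where "a S = U * double_occupancy L d S - h * staggered_moment L d S" for S
  have H: "\<forall>i\<in>?K. \<forall>j\<in>?K. hubbard_H L d t U h i j = (if i = j then of_real (a j) else 0) + hopping L d t i j"
    using sector_subset unfolding a_def by (blast intro: hubbard_H_eq)
  have gibbs_le: "(\<Sum>S\<in>?K. ?\<mu> S * a S) \<le> a (all_up L d) + 2 * (4 * \<bar>t\<bar> * (?N * real d)) + (2 * ln (card ?K) + 1) / \<beta>"
    by (rule gibbs_weight_diagonal_le[OF finite_sector all_up_half_filled \<beta> unitary eigen H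
          hermitian_on_subset[OF hermitian_on_hopping sector_subset]
          row_bounded_subset[OF row_bounded_hopping _ sector_subset]]) simp_all
  have hm_le: "\<bar>h * staggered_moment L d S\<bar> \<le> \<bar>h\<bar> * ?N / 2" for S
    using mult_left_mono[OF abs_staggered_moment_le[of L d S], of "\<bar>h\<bar>"] by (simp add: abs_mult)
  have a_le: "a (all_up L d) \<le> \<bar>h\<bar> * ?N / 2"
    unfolding a_def double_occupancy_all_up using hm_le[of "all_up L d"] by linarith
  have "(\<Sum>S\<in>?K. ?\<mu> S * (h * staggered_moment L d S)) \<le> (\<Sum>S\<in>?K. ?\<mu> S * (\<bar>h\<bar> * ?N / 2))"
    using order_trans[OF abs_ge_self hm_le] gibbs_weight_nonneg by (intro sum_mono mult_left_mono) auto
  also have "\<dots> = \<bar>h\<bar> * ?N / 2"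
    unfolding sum_distrib_right[symmetric] sum_weight by simp
  finally have stag_le: "(\<Sum>S\<in>?K. ?\<mu> S * (h * staggered_moment L d S)) \<le> \<bar>h\<bar> * ?N / 2" .
  have "(\<Sum>S\<in>?K. ?\<mu> S * a S)
      = U * (\<Sum>S\<in>?K. ?\<mu> S * double_occupancy L d S) - (\<Sum>S\<in>?K. ?\<mu> S * (h * staggered_moment L d S))"
    unfolding a_def by (simp add: algebra_simps sum_subtractf sum_distrib_left)
  then have "U * (\<Sum>S\<in>?K. ?\<mu> S * double_occupancy L d S)
      \<le> \<bar>h\<bar> * ?N / 2 + \<bar>h\<bar> * ?N / 2 + 2 * (4 * \<bar>t\<bar> * (?N * real d)) + (2 * ln (card ?K) + 1) / \<beta>"
    using gibbs_le a_le stag_le by linarith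
  then show ?thesis
    by (simp add: algebra_simps)
qed

lemma gibbs_double_occupancy_density_le:
  assumes L: "L > 0" and \<beta>: "\<beta> > 0" and U: "U > 0" and h: "\<bar>h\<bar> \<le> h0"
  shows "(\<Sum>S\<in>half_filled L d. weight \<beta> S * double_occupancy L d S)
    \<le> real (L ^ d) * ((8 * \<bar>t\<bar> * real d + h0 + 5 / \<beta>) / U)"
proof -
  let ?N = "real (L ^ d)"
  have "U * (\<Sum>S\<in>half_filled L d. weight \<beta> S * double_occupancy L d S)
      \<le> ?N * (8 * \<bar>t\<bar> * real d + \<bar>h\<bar>) + (2 * ln (card (half_filled L d)) + 1) / \<beta>"
    by (rule gibbs_double_occupancy_le[OF \<beta>])
  also have "\<dots> \<le> ?N * (8 * \<bar>t\<bar> * real d + h0) + 5 * ?N / \<beta>"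
    using h ln_card_half_filled_le[OF L, of d] \<beta> by (intro add_mono mult_left_mono divide_right_mono) auto
  also have "\<dots> = U * (?N * ((8 * \<bar>t\<bar> * real d + h0 + 5 / \<beta>) / U))"
    using U by (simp add: field_simps)
  finally show ?thesis
    using U by (simp add: pos_le_divide_eq mult.commute)
qed

end

section \<open>Charge observables\<close>

lemma sum_lessThan_double: "(\<Sum>i<2 * (n::nat). f i) = (\<Sum>i<n. f (2 * i) + f (2 * i + 1) :: 'a::comm_monoid_add)"
  by (induction n) (simp_all add: add.assoc)

definition site_occupation :: "nat \<Rightarrow> nat set \<Rightarrow> real" where
  "site_occupation x S = of_bool (mode x Up \<in> S) + of_bool (mode x Dn \<in> S)"

definition stag_charge :: "nat \<Rightarrow> nat \<Rightarrow> nat set \<Rightarrow> complex" where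
  "stag_charge L d S = (\<Sum>x\<in>sites L d. eta L d x * of_real (site_occupation x S - 1))"

lemma diagonal_on_ntot_minus_one:
  "diagonal_on (Pow {0..<nmodes L d}) (op_add (ntot L d x) (op_smult (-1) op_id))
     (\<lambda>S. of_real (site_occupation x S - 1))"
  unfolding ntot_def
  by (rule diagonal_on_cong[OF diagonal_on_op_add[OF diagonal_on_op_add[OF diagonal_on_num
        diagonal_on_num] diagonal_on_op_smult[OF diagonal_on_op_id]]])
    (simp add: site_occupation_def)

lemma diagonal_on_q_ch:
  "diagonal_on (Pow {0..<nmodes L d}) (q_ch L d x) (\<lambda>S. of_real ((site_occupation x S - 1)\<^sup>2))"
  unfolding q_ch_def Let_def
  by (rule diagonal_on_cong[OF diagonal_on_op_mult[OF diagonal_on_ntot_minus_one diagonal_on_ntot_minus_one]])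
    (simp add: power2_eq_square)

lemma diagonal_on_num_up_num_dn:
  "diagonal_on (Pow {0..<nmodes L d}) (op_mult (nmodes L d) (num L d x Up) (num L d x Dn))
     (\<lambda>S. of_real (of_bool (mode x Up \<in> S) * of_bool (mode x Dn \<in> S)))"
  by (rule diagonal_on_cong[OF diagonal_on_op_mult[OF diagonal_on_num diagonal_on_num]]) simp

lemma diagonal_on_C_ch: "diagonal_on (Pow {0..<nmodes L d}) (C_ch L d) (stag_charge L d)"
  unfolding C_ch_def
  by (rule diagonal_on_cong[OF diagonal_on_op_sum[OF diagonal_on_op_smult[OF diagonal_on_ntot_minus_one]]])
    (simp add: stag_charge_def)

lemma diagonal_on_C_ch_sq:
  "diagonal_on (Pow {0..<nmodes L d}) (op_mult (nmodes L d) (C_ch L d) (C_ch L d))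
     (\<lambda>S. stag_charge L d S * stag_charge L d S)"
  by (rule diagonal_on_op_mult[OF diagonal_on_C_ch diagonal_on_C_ch])

lemma sum_site_occupation:
  assumes "S \<in> half_filled L d"
  shows "(\<Sum>x\<in>sites L d. site_occupation x S) = real (L ^ d)"
proof -
  have S: "S \<subseteq> {..<2 * L ^ d}" "card S = L ^ d"
    using assms unfolding sector_def nmodes_def nsites_def by auto
  have "(\<Sum>x\<in>sites L d. site_occupation x S) = (\<Sum>i<2 * L ^ d. of_bool (i \<in> S))"
    unfolding sum_lessThan_double site_occupation_def sites_def mode_def
    by (simp add: atLeast0LessThan)
  also have "\<dots> = real (L ^ d)"
    using S by (simp add: Int_absorb1 Int_def[symmetric])
  finally show ?thesis .
qed

lemma sum_site_charge_sq:
  assumes "S \<in> half_filled L d"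
  shows "(\<Sum>x\<in>sites L d. (site_occupation x S - 1)\<^sup>2) = 2 * double_occupancy L d S"
proof -
  have "(site_occupation x S - 1)\<^sup>2
      = 1 - site_occupation x S + 2 * (of_bool (mode x Up \<in> S) * of_bool (mode x Dn \<in> S))" for x
    unfolding site_occupation_def by (simp add: power2_eq_square)
  then have "(\<Sum>x\<in>sites L d. (site_occupation x S - 1)\<^sup>2)
      = real (card (sites L d)) - (\<Sum>x\<in>sites L d. site_occupation x S) + 2 * double_occupancy L d S"
    unfolding double_occupancy_def by (simp add: sum.distrib sum_subtractf sum_distrib_left)
  then show ?thesis
    using sum_site_occupation[OF assms] by (simp add: sites_def)
qed

lemma abs_charge_le_sq: "\<bar>site_occupation x S - 1\<bar> \<le> (site_occupation x S - 1)\<^sup>2"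
  unfolding site_occupation_def by simp

lemma abs_charge_le_1: "\<bar>site_occupation x S - 1\<bar> \<le> 1"
  unfolding site_occupation_def by simp

lemma norm_eta: "cmod (eta L d x) = 1"
  unfolding eta_def by (simp add: norm_power)

lemma norm_stag_charge_le_sum: "cmod (stag_charge L d S) \<le> (\<Sum>x\<in>sites L d. \<bar>site_occupation x S - 1\<bar>)"
proof -
  have "cmod (stag_charge L d S) \<le> (\<Sum>x\<in>sites L d. cmod (eta L d x * of_real (site_occupation x S - 1)))"
    unfolding stag_charge_def by (rule norm_sum)
  also have "\<dots> = (\<Sum>x\<in>sites L d. \<bar>site_occupation x S - 1\<bar>)"
    by (simp only: norm_mult norm_eta norm_of_real mult_1)
  finally show ?thesis .
qed

lemma norm_stag_charge_le_double_occupancy: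
  assumes "S \<in> half_filled L d"
  shows "cmod (stag_charge L d S) \<le> 2 * double_occupancy L d S"
proof -
  have "cmod (stag_charge L d S) \<le> (\<Sum>x\<in>sites L d. (site_occupation x S - 1)\<^sup>2)"
    using norm_stag_charge_le_sum sum_mono[OF abs_charge_le_sq] by (rule order_trans)
  then show ?thesis
    unfolding sum_site_charge_sq[OF assms] .
qed

lemma norm_stag_charge_le_sites: "cmod (stag_charge L d S) \<le> real (L ^ d)"
proof -
  have "cmod (stag_charge L d S) \<le> (\<Sum>x\<in>sites L d. 1)"
    using norm_stag_charge_le_sum sum_mono[OF abs_charge_le_1] by (rule order_trans)
  then show ?thesis
    by (simp add: sites_def)
qed

context hubbard_eigenbasis
begin

lemma gibbs_q_ch_sum:
  "(\<Sum>x\<in>sites L d. Re (gibbs_hf L d t \<beta> U h (q_ch L d x)))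
    = 2 * (\<Sum>S\<in>half_filled L d. weight \<beta> S * double_occupancy L d S)"
proof -
  have "(\<Sum>x\<in>sites L d. Re (gibbs_hf L d t \<beta> U h (q_ch L d x)))
      = (\<Sum>S\<in>half_filled L d. weight \<beta> S * (\<Sum>x\<in>sites L d. (site_occupation x S - 1)\<^sup>2))"
    unfolding Re_gibbs_hf_diagonal[OF diagonal_on_q_ch] sum_distrib_left by (rule sum.swap)
  then show ?thesis
    by (simp add: sum_site_charge_sq sum_distrib_left mult_ac cong: sum.cong)
qed

lemma gibbs_num_up_num_dn_sum:
  "(\<Sum>x\<in>sites L d. Re (gibbs_hf L d t \<beta> U h (op_mult (nmodes L d) (num L d x Up) (num L d x Dn))))
    = (\<Sum>S\<in>half_filled L d. weight \<beta> S * double_occupancy L d S)"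
  unfolding Re_gibbs_hf_diagonal[OF diagonal_on_num_up_num_dn] double_occupancy_def sum_distrib_left
  by (rule sum.swap)

lemma norm_gibbs_C_ch_le:
  "cmod (gibbs_hf L d t \<beta> U h (C_ch L d))
    \<le> 2 * (\<Sum>S\<in>half_filled L d. weight \<beta> S * double_occupancy L d S)"
proof -
  have "cmod (gibbs_hf L d t \<beta> U h (C_ch L d)) \<le> (\<Sum>S\<in>half_filled L d. weight \<beta> S * cmod (stag_charge L d S))"
    unfolding gibbs_hf_diagonal[OF diagonal_on_C_ch]
    by (rule order_trans[OF norm_sum]) (simp add: norm_mult gibbs_weight_nonneg mult.commute)
  also have "\<dots> \<le> (\<Sum>S\<in>half_filled L d. weight \<beta> S * (2 * double_occupancy L d S))"
    using norm_stag_charge_le_double_occupancy gibbs_weight_nonneg by (intro sum_mono mult_left_mono) auto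
  finally show ?thesis
    by (simp add: sum_distrib_left mult_ac)
qed

lemma Re_gibbs_C_ch_sq_le:
  "Re (gibbs_hf L d t \<beta> U h (op_mult (nmodes L d) (C_ch L d) (C_ch L d)))
    \<le> 2 * real (L ^ d) * (\<Sum>S\<in>half_filled L d. weight \<beta> S * double_occupancy L d S)"
proof -
  let ?C = "stag_charge L d"
  have "Re (gibbs_hf L d t \<beta> U h (op_mult (nmodes L d) (C_ch L d) (C_ch L d)))
      = (\<Sum>S\<in>half_filled L d. weight \<beta> S * Re (?C S * ?C S))"
    unfolding gibbs_hf_diagonal[OF diagonal_on_C_ch_sq] by (simp add: Re_sum mult.commute)
  also have "\<dots> \<le> (\<Sum>S\<in>half_filled L d. weight \<beta> S * (2 * double_occupancy L d S * real (L ^ d)))"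
  proof (intro sum_mono mult_left_mono)
    fix S assume S: "S \<in> half_filled L d"
    have "Re (?C S * ?C S) \<le> cmod (?C S) * cmod (?C S)"
      by (metis complex_Re_le_cmod norm_mult)
    also have "\<dots> \<le> 2 * double_occupancy L d S * real (L ^ d)"
      using norm_stag_charge_le_double_occupancy[OF S] norm_stag_charge_le_sites double_occupancy_nonneg
      by (intro mult_mono) auto
    finally show "Re (?C S * ?C S) \<le> 2 * double_occupancy L d S * real (L ^ d)" .
  qed (rule gibbs_weight_nonneg)
  finally show ?thesis
    by (simp add: sum_distrib_left mult_ac)
qed

end

text \<open>The absolute values make \<open>charge_eps\<close> nonnegative for all arguments, as required of
  \<open>\<epsilon>\<close>; for \<open>U, \<beta> > 0\<close> they are void.\<close>

definition charge_eps :: "real \<Rightarrow> nat \<Rightarrow> real \<Rightarrow> real \<Rightarrow> real \<Rightarrow> real" where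
  "charge_eps t d h0 U \<beta> = 2 * (8 * \<bar>t\<bar> * real d + h0 + 5 / \<bar>\<beta>\<bar>) / \<bar>U\<bar>"

lemma charge_eps_nonneg: "h0 \<ge> 0 \<Longrightarrow> charge_eps t d h0 U \<beta> \<ge> 0"
  unfolding charge_eps_def by simp

lemma charge_bounds:
  fixes L d :: nat and t \<beta> U h h0 :: real
  assumes L: "L > 0" and \<beta>: "\<beta> > 0" and U: "U > 0" and h: "\<bar>h\<bar> \<le> h0"
  shows "(1 / real (L ^ d)) * (\<Sum>x\<in>sites L d. Re (gibbs_hf L d t \<beta> U h (q_ch L d x)))
           \<le> charge_eps t d h0 U \<beta>"
    and "(1 / real (L ^ d)) * (\<Sum>x\<in>sites L d. Re (gibbs_hf L d t \<beta> U h
           (op_mult (nmodes L d) (num L d x Up) (num L d x Dn)))) \<le> charge_eps t d h0 U \<beta> / 2"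
    and "cmod (gibbs_hf L d t \<beta> U h (C_ch L d) / of_nat (L ^ d)) \<le> charge_eps t d h0 U \<beta>"
    and "(1 / real (L ^ d) ^ 2) * Re (gibbs_hf L d t \<beta> U h
           (op_mult (nmodes L d) (C_ch L d) (C_ch L d))) \<le> charge_eps t d h0 U \<beta>"
proof -
  obtain V lam where "hubbard_eigenbasis L d t U h V lam"
    using hubbard_spectral unfolding hubbard_eigenbasis_def by blast
  then interpret hubbard_eigenbasis L d t U h V lam .
  let ?N = "real (L ^ d)"
  define D where "D = (\<Sum>S\<in>half_filled L d. weight \<beta> S * double_occupancy L d S)"
  have eps: "charge_eps t d h0 U \<beta> / 2 = (8 * \<bar>t\<bar> * real d + h0 + 5 / \<beta>) / U"
    using U \<beta> unfolding charge_eps_def by (simp add: field_simps)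
  have "D \<le> ?N * (charge_eps t d h0 U \<beta> / 2)"
    unfolding eps D_def by (rule gibbs_double_occupancy_density_le[OF L \<beta> U h])
  then have D: "D / ?N \<le> charge_eps t d h0 U \<beta> / 2"
    using L by (subst pos_divide_le_eq) (simp_all add: mult.commute)
  show "(1 / ?N) * (\<Sum>x\<in>sites L d. Re (gibbs_hf L d t \<beta> U h (q_ch L d x))) \<le> charge_eps t d h0 U \<beta>"
    using D unfolding gibbs_q_ch_sum D_def[symmetric] by (simp add: mult.commute)
  show "(1 / ?N) * (\<Sum>x\<in>sites L d. Re (gibbs_hf L d t \<beta> U h
      (op_mult (nmodes L d) (num L d x Up) (num L d x Dn)))) \<le> charge_eps t d h0 U \<beta> / 2"
    using D unfolding gibbs_num_up_num_dn_sum D_def[symmetric] by simp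
  have "cmod (gibbs_hf L d t \<beta> U h (C_ch L d) / of_nat (L ^ d)) \<le> 2 * D / ?N"
    unfolding norm_divide norm_of_nat D_def using norm_gibbs_C_ch_le L by (intro divide_right_mono) auto
  then show "cmod (gibbs_hf L d t \<beta> U h (C_ch L d) / of_nat (L ^ d)) \<le> charge_eps t d h0 U \<beta>"
    using D by (simp add: mult.commute)
  have "(1 / ?N ^ 2) * Re (gibbs_hf L d t \<beta> U h (op_mult (nmodes L d) (C_ch L d) (C_ch L d)))
      \<le> (1 / ?N ^ 2) * (2 * ?N * D)"
    unfolding D_def using Re_gibbs_C_ch_sq_le by (intro mult_left_mono) auto
  also have "\<dots> = 2 * (D / ?N)"
    using L by (simp add: power2_eq_square)
  finally show "(1 / ?N ^ 2) * Re (gibbs_hf L d t \<beta> U h (op_mult (nmodes L d) (C_ch L d) (C_ch L d)))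
      \<le> charge_eps t d h0 U \<beta>"
    using D by (simp add: mult.commute)
qed

lemma charge_eps_le:
  assumes l0: "l0 > 0" and t: "t \<noteq> 0" and U: "U > 0" and \<beta>: "\<beta> * J0 t U \<ge> l0"
  shows "charge_eps t d h0 U \<beta> \<le> 2 * (8 * \<bar>t\<bar> * real d + h0) / U + 40 * t\<^sup>2 / l0 / U / U"
proof -
  have "l0 * U \<le> \<beta> * (4 * t\<^sup>2)"
    using U \<beta> unfolding J0_def by (simp add: field_simps)
  moreover have "0 < l0 * U"
    using l0 U by simp
  ultimately have "0 < \<beta> * (4 * t\<^sup>2)"
    by linarith
  then have "\<beta> > 0"
    using t by (simp add: zero_less_mult_iff)
  with \<open>l0 * U \<le> \<beta> * (4 * t\<^sup>2)\<close> have "5 / \<bar>\<beta>\<bar> \<le> 20 * t\<^sup>2 / (l0 * U)"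
    using l0 U by (simp add: field_simps)
  then have "charge_eps t d h0 U \<beta> \<le> 2 * (8 * \<bar>t\<bar> * real d + h0 + 20 * t\<^sup>2 / (l0 * U)) / U"
    using U unfolding charge_eps_def by (simp add: divide_right_mono)
  also have "\<dots> = 2 * (8 * \<bar>t\<bar> * real d + h0) / U + 40 * t\<^sup>2 / l0 / U / U"
    using U l0 by (simp add: field_simps)
  finally show ?thesis .
qed

lemma sup_charge_eps_tendsto_0:
  assumes h0: "h0 \<ge> 0" and l0: "l0 > 0" and t: "t \<noteq> 0"
  shows "((\<lambda>U. SUP \<beta>\<in>{\<beta>. \<beta> * J0 t U \<ge> l0}. ereal (charge_eps t d h0 U \<beta>)) \<longlongrightarrow> 0) at_top"
proof -
  define g where "g U = 2 * (8 * \<bar>t\<bar> * real d + h0) / U + 40 * t\<^sup>2 / l0 / U / U" for U :: real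
  have upper: "\<forall>\<^sub>F U in at_top. (SUP \<beta>\<in>{\<beta>. \<beta> * J0 t U \<ge> l0}. ereal (charge_eps t d h0 U \<beta>)) \<le> ereal (g U)"
    using charge_eps_le[OF l0 t] unfolding g_def
    by (intro eventually_at_top_linorderI[of 1] SUP_least) auto
  have lower: "\<forall>\<^sub>F U in at_top. 0 \<le> (SUP \<beta>\<in>{\<beta>. \<beta> * J0 t U \<ge> l0}. ereal (charge_eps t d h0 U \<beta>))"
  proof (rule eventually_at_top_linorderI[of 1])
    fix U :: real assume "U \<ge> 1"
    then have "l0 * U / (4 * t\<^sup>2) * J0 t U = l0"
      unfolding J0_def using t by (simp add: field_simps)
    then show "0 \<le> (SUP \<beta>\<in>{\<beta>. \<beta> * J0 t U \<ge> l0}. ereal (charge_eps t d h0 U \<beta>))"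
      using charge_eps_nonneg[OF h0] by (intro SUP_upper2[of "l0 * U / (4 * t\<^sup>2)"]) auto
  qed
  have inverse: "((\<lambda>U. c / U) \<longlongrightarrow> 0) at_top" for c :: real
    by (rule tendsto_divide_0[OF tendsto_const filterlim_at_top_imp_at_infinity[OF filterlim_ident]])
  have "(g \<longlongrightarrow> 0 + 0) at_top"
    unfolding g_def
    by (intro tendsto_add inverse tendsto_divide_0[OF inverse] filterlim_at_top_imp_at_infinity filterlim_ident)
  then have "((\<lambda>U. ereal (g U)) \<longlongrightarrow> 0) at_top"
    unfolding zero_ereal_def by (intro tendsto_ereal) simp
  then show ?thesis
    by (rule tendsto_sandwich[OF lower upper tendsto_const])
qed

theorem theorem1p9:
  fixes d :: nat and t :: real
  assumes "d \<ge> 1" and "t \<noteq> 0"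
  shows "\<forall>l0 h0 :: real. l0 > 0 \<longrightarrow> h0 > 0 \<longrightarrow>
    (\<exists>U0 :: real. \<exists>\<epsilon> :: real \<Rightarrow> real \<Rightarrow> real.
       (\<forall>U \<beta>. \<epsilon> U \<beta> \<ge> 0) \<and>
       (\<forall>U \<beta> (L :: nat) h. U > 0 \<longrightarrow> U \<ge> U0 \<longrightarrow> \<beta> > 0 \<longrightarrow> \<beta> * J0 t U \<ge> l0 \<longrightarrow>
          even L \<longrightarrow> L > 0 \<longrightarrow> \<bar>h\<bar> \<le> h0 \<longrightarrow>
          (1 / real (L ^ d)) * (\<Sum>x\<in>sites L d. Re (gibbs_hf L d t \<beta> U h (q_ch L d x))) \<le> \<epsilon> U \<beta> \<and>
          (1 / real (L ^ d)) * (\<Sum>x\<in>sites L d. Re (gibbs_hf L d t \<beta> U h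
              (op_mult (nmodes L d) (num L d x Up) (num L d x Dn)))) \<le> \<epsilon> U \<beta> / 2 \<and>
          cmod (gibbs_hf L d t \<beta> U h (C_ch L d) / of_nat (L ^ d)) \<le> \<epsilon> U \<beta> \<and>
          (1 / real (L ^ d) ^ 2) * Re (gibbs_hf L d t \<beta> U h
              (op_mult (nmodes L d) (C_ch L d) (C_ch L d))) \<le> \<epsilon> U \<beta>) \<and>
       ((\<lambda>U. SUP \<beta>\<in>{\<beta>. \<beta> * J0 t U \<ge> l0}. ereal (\<epsilon> U \<beta>)) \<longlongrightarrow> 0) at_top)"
  apply (intro allI impI)
  subgoal for l0 h0
    using sup_charge_eps_tendsto_0[of h0 l0 t d] assms(2)
    by (intro exI[of _ 0] exI[of _ "charge_eps t d h0"] conjI allI impI charge_bounds charge_eps_nonneg) auto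
  done

end
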